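(* Let $q\ge1$, $k\ge2$ be integers and $\mathcal{A}$ as in the context. For the type-$\mathcal{A}$ random walk on $\mathbb{Z}^k$ let $\overline{S}_{n,k}=\frac1n(X_1+\cdots+X_n)$. Then for every $\varepsilon>0$, $$\mathbb{V}(\overline{S}_{n,k})=O_{\mathcal{A},k,q,\varepsilon}(n^{-1/2+\varepsilon})\quad\text{as } n\to\infty,$$ where $\mathbb{V}$ denotes variance.
   Context: $\mathcal{A}=\{\boldsymbol{\alpha}_1,\dots,\boldsymbol{\alpha}_q\}$ is a finite set of vectors $\boldsymbol{\alpha}_t=(\alpha_{t,1},\dots,\alpha_{t,k})$ with $0<\alpha_{t,j}<1$ for all $j$ and $\alpha_{t,1}+\cdots+\alpha_{t,k}=1$. For $\boldsymbol{\alpha}=(\alpha_1,\dots,\alpha_k)$ of this form, a type-$\boldsymbol{\alpha}$ step $\mathbf{w}(\boldsymbol{\alpha})$ is a random vector equal to the $j$-th standard basis vector of $\mathbb{Z}^k$ with probability $\alpha_j$. The type-$\mathcal{A}$ random walk is $\mathbf{p}_0=(0,\dots,0)$, $\mathbf{p}_i=\mathbf{p}_{i-1}+\mathbf{w}(\boldsymbol{\alpha}'_i)$ for $i\ge1$, where at each step a type $\boldsymbol{\alpha}'_i\in\mathcal{A}$ is chosen and the steps are independent. A lattice point $\mathbf{n}=(n_1,\dots,n_k)\in\mathbb{Z}^k$ is visible if there is no other lattice point on the segment joining it to the origin (equivalently $\gcd(n_1,\dots,n_k)=1$). $X_i=1$ if $\mathbf{p}_i$ is visible and $X_i=0$ otherwise.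 *)

theory Defs
  imports "HOL-Probability.Probability"
begin

text \<open>A single type-alpha step is the index j (0-based, j < k) of the standard basis
  vector e_j that is added, chosen with probability alpha_j.\<close>

definition step_pmf :: "real list \<Rightarrow> nat pmf" where
  "step_pmf \<alpha> = embed_pmf (\<lambda>j. if j < length \<alpha> then \<alpha> ! j else 0)"

text \<open>Joint law of the first n steps of the walk, given the (deterministic) choice
  sequence ch, where ch i is the type used at step i (i \<ge> 1).\<close>

fun steps_pmf :: "(nat \<Rightarrow> real list) \<Rightarrow> nat \<Rightarrow> nat list pmf" where
  "steps_pmf ch 0 = return_pmf []"
| "steps_pmf ch (Suc n) =
     bind_pmf (steps_pmf ch n) (\<lambda>ws. map_pmf (\<lambda>w. ws @ [w]) (step_pmf (ch (Suc n))))"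

text \<open>Position p_i in Z^k after i steps: coordinate j counts the steps equal to e_j.\<close>

definition walk_pos :: "nat \<Rightarrow> nat list \<Rightarrow> nat \<Rightarrow> int list" where
  "walk_pos k ws i = map (\<lambda>j. int (count_list (take i ws) j)) [0..<k]"

definition visible :: "int list \<Rightarrow> bool" where
  "visible v \<longleftrightarrow> Gcd (set v) = 1"

definition X_ind :: "nat \<Rightarrow> nat list \<Rightarrow> nat \<Rightarrow> real" where
  "X_ind k ws i = (if visible (walk_pos k ws i) then 1 else 0)"

definition S_bar :: "nat \<Rightarrow> nat \<Rightarrow> nat list \<Rightarrow> real" where
  "S_bar k n ws = (1 / real n) * (\<Sum>i=1..n. X_ind k ws i)"

definition valid_type :: "nat \<Rightarrow> real list \<Rightarrow> bool" where
  "valid_type k \<alpha> \<longleftrightarrow> length \<alpha> = k \<and> (\<forall>j<k. 0 < \<alpha> ! j \<and> \<alpha> ! j < 1) \<and> sum_list \<alpha> = 1"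

end

theory Submission
  imports Defs "HOL-Computational_Algebra.Primes" "HOL-Library.Function_Algebras"
begin

text \<open>
  Whether \<open>p\<^sub>i\<close> is visible is decided by the primes dividing all its coordinates. These divide the
  coordinate sum \<open>i\<close>, so by inclusion-exclusion over the prime factors of \<open>i\<close> the indicator \<open>X\<^sub>i\<close>
  is a signed sum of at most \<open>2 ^ \<omega>(i) = O(i powr \<epsilon>)\<close> events "\<open>d\<close> divides every coordinate of \<open>p\<^sub>i\<close>".

  For \<open>i < j\<close>, condition on the first \<open>i\<close> steps. All step types give every coordinate probability
  at least some \<open>c\<^sub>0 > 0\<close>, so each later step is, with probability \<open>c\<^sub>0\<close>, a fair coin flip between two
  fixed coordinates \<open>a\<close> and \<open>b\<close>. Given that \<open>N\<close> of the last \<open>j - i\<close> steps are such flips, the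
  number of them landing on \<open>a\<close> is \<open>Binomial(N, 1/2)\<close>, whose distribution modulo \<open>d\<close> changes by at
  most its total variation \<open>2 / sqrt (N + 1)\<close> under a shift. Hence moving mass from \<open>b\<close> to \<open>a\<close> in
  \<open>p\<^sub>i\<close> changes the probability that \<open>d\<close> divides every coordinate of \<open>p\<^sub>j\<close> by \<open>O(1 / sqrt (j - i + 1))\<close>,
  and so does replacing \<open>p\<^sub>i\<close> by any point with the same coordinate sum. This bounds
  \<open>Cov(X\<^sub>i, X\<^sub>j)\<close> by \<open>O(n powr \<epsilon> / sqrt (j - i + 1))\<close>, and summing over \<open>i, j \<le> n\<close> gives the variance
  bound \<open>O(n powr (\<epsilon> - 1/2))\<close>.
\<close>

lemma expectation_bind_pmf_bounded:
  fixes f :: "'b \<Rightarrow> real"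
  assumes "\<And>x. \<bar>f x\<bar> \<le> B"
  shows "measure_pmf.expectation (bind_pmf M N) f =
    measure_pmf.expectation M (\<lambda>x. measure_pmf.expectation (N x) f)"
proof -
  have "integral\<^sup>L (measure_pmf M \<bind> (\<lambda>x. measure_pmf (N x))) f =
      (\<integral>x. integral\<^sup>L (measure_pmf (N x)) f \<partial>measure_pmf M)"
    by (rule integral_bind[where K = "count_space UNIV" and B = B and B' = 1])
      (use assms in \<open>auto simp: measure_pmf.emeasure_space_1 measure_pmf_in_subprob_algebra
        intro: measure_pmf.finite_measure\<close>)
  then show ?thesis
    by (simp add: measure_pmf_bind)
qed

lemma integrable_bounded_pmf:
  fixes f :: "'b \<Rightarrow> real"
  assumes "\<And>x. \<bar>f x\<bar> \<le> B"
  shows "integrable (measure_pmf M) f"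
  by (rule measure_pmf.integrable_const_bound[where B = B]) (use assms in auto)

lemma expectation_cong_pmf:
  fixes f g :: "'b \<Rightarrow> real"
  assumes "\<And>x. x \<in> set_pmf M \<Longrightarrow> f x = g x"
  shows "measure_pmf.expectation M f = measure_pmf.expectation M g"
  by (rule integral_cong_AE) (auto intro!: AE_pmfI assms)

lemma abs_expectation_le_pmf:
  fixes f :: "'b \<Rightarrow> real"
  assumes "\<And>x. x \<in> set_pmf M \<Longrightarrow> \<bar>f x\<bar> \<le> B"
  shows "\<bar>measure_pmf.expectation M f\<bar> \<le> B"
proof -
  have "\<bar>measure_pmf.expectation M f\<bar> \<le> measure_pmf.expectation M (\<lambda>x. \<bar>f x\<bar>)"
    by (rule integral_abs_bound)
  also have "\<dots> \<le> measure_pmf.expectation M (\<lambda>x. B)"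
    by (rule integral_mono_AE)
      (use assms in \<open>auto intro!: AE_pmfI measure_pmf.integrable_const_bound[where B = B]\<close>)
  finally show ?thesis
    by simp
qed

lemma expectation_in_unit_interval_pmf:
  fixes f :: "'b \<Rightarrow> real"
  assumes "\<And>x. 0 \<le> f x" and "\<And>x. f x \<le> 1"
  shows "0 \<le> measure_pmf.expectation M f" and "measure_pmf.expectation M f \<le> 1"
proof -
  show "0 \<le> measure_pmf.expectation M f"
    using assms(1) by simp
  have "\<bar>measure_pmf.expectation M f\<bar> \<le> 1"
    using assms by (intro abs_expectation_le_pmf) (simp add: abs_le_iff order_trans[OF _ assms(1)])
  then show "measure_pmf.expectation M f \<le> 1"
    by simp
qed

lemma abs_expectation_centered_square_le:
  fixes f :: "'a \<Rightarrow> real"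
  assumes "\<And>x. 0 \<le> f x" and "\<And>x. f x \<le> 1"
  shows "\<bar>measure_pmf.expectation M (\<lambda>x. (f x - measure_pmf.expectation M f) * (f x - measure_pmf.expectation M f))\<bar> \<le> 1"
proof (rule abs_expectation_le_pmf)
  fix x
  have "\<bar>f x - measure_pmf.expectation M f\<bar> \<le> 1"
    using expectation_in_unit_interval_pmf[of f M, OF assms] assms[of x] by (simp add: abs_le_iff)
  then have "\<bar>f x - measure_pmf.expectation M f\<bar> * \<bar>f x - measure_pmf.expectation M f\<bar> \<le> 1 * 1"
    by (intro mult_mono) auto
  then show "\<bar>(f x - measure_pmf.expectation M f) * (f x - measure_pmf.expectation M f)\<bar> \<le> 1"
    by (simp only: abs_mult)
qed

lemma abs_expectation_diff_le_pmf:
  fixes f g u :: "'b \<Rightarrow> real"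
  assumes "\<And>x. \<bar>f x\<bar> \<le> B" "\<And>x. \<bar>g x\<bar> \<le> B" "\<And>x. \<bar>u x\<bar> \<le> B'"
    and "\<And>x. x \<in> set_pmf M \<Longrightarrow> \<bar>f x - g x\<bar> \<le> u x"
  shows "\<bar>measure_pmf.expectation M f - measure_pmf.expectation M g\<bar> \<le> measure_pmf.expectation M u"
proof -
  have int: "integrable M f" "integrable M g" "integrable M u"
    by (meson integrable_bounded_pmf assms)+
  have "\<bar>measure_pmf.expectation M f - measure_pmf.expectation M g\<bar> =
      \<bar>measure_pmf.expectation M (\<lambda>x. f x - g x)\<bar>"
    using int by simp
  also have "\<dots> \<le> measure_pmf.expectation M (\<lambda>x. \<bar>f x - g x\<bar>)"
    by (rule integral_abs_bound)
  also have "\<dots> \<le> measure_pmf.expectation M u"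
    by (rule integral_mono_AE) (use int assms(4) in \<open>auto intro!: AE_pmfI\<close>)
  finally show ?thesis .
qed

lemma abs_expectation_mult_centered_le:
  fixes f g :: "'a \<Rightarrow> real"
  assumes "finite (set_pmf M)" and "\<And>x. x \<in> set_pmf M \<Longrightarrow> \<bar>f x\<bar> \<le> 1"
    and "\<And>x y. x \<in> set_pmf M \<Longrightarrow> y \<in> set_pmf M \<Longrightarrow> \<bar>g x - g y\<bar> \<le> B"
  shows "\<bar>measure_pmf.expectation M (\<lambda>x. f x * (g x - measure_pmf.expectation M g))\<bar> \<le> B"
proof (rule abs_expectation_le_pmf)
  fix x
  assume x: "x \<in> set_pmf M"
  have "g x - measure_pmf.expectation M g = measure_pmf.expectation M (\<lambda>y. g x - g y)"
    using assms(1) by (simp add: integrable_measure_pmf_finite)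
  also have "\<bar>\<dots>\<bar> \<le> B"
    using assms(3)[OF x] by (rule abs_expectation_le_pmf)
  finally have "\<bar>g x - measure_pmf.expectation M g\<bar> \<le> B" .
  with mult_mono[OF assms(2)[OF x] this] show "\<bar>f x * (g x - measure_pmf.expectation M g)\<bar> \<le> B"
    by (simp add: abs_mult)
qed

lemma variance_scaled_sum_pmf:
  fixes X :: "nat \<Rightarrow> 'b \<Rightarrow> real"
  assumes "finite (set_pmf M)" and "finite I"
  shows "measure_pmf.variance M (\<lambda>x. c * (\<Sum>i\<in>I. X i x)) =
    c\<^sup>2 * (\<Sum>i\<in>I. \<Sum>j\<in>I. measure_pmf.expectation M
      (\<lambda>x. (X i x - measure_pmf.expectation M (X i)) * (X j x - measure_pmf.expectation M (X j))))"
proof -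
  have int: "integrable M f" for f :: "'b \<Rightarrow> real"
    using assms(1) by (rule integrable_measure_pmf_finite)
  define a where "a i = measure_pmf.expectation M (X i)" for i
  have "(c * (\<Sum>i\<in>I. X i x) - measure_pmf.expectation M (\<lambda>x. c * (\<Sum>i\<in>I. X i x)))\<^sup>2 =
      c\<^sup>2 * (\<Sum>i\<in>I. \<Sum>j\<in>I. (X i x - a i) * (X j x - a j))" for x
  proof -
    have "c * (\<Sum>i\<in>I. X i x) - measure_pmf.expectation M (\<lambda>x. c * (\<Sum>i\<in>I. X i x)) =
        c * (\<Sum>i\<in>I. X i x - a i)"
      by (simp add: a_def int sum_subtractf right_diff_distrib)
    then show ?thesis
      by (simp add: power_mult_distrib power2_eq_square sum_product)
  qed
  then show ?thesis
    by (simp add: a_def int)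
qed

section \<open>The symmetric binomial distribution\<close>

lemma central_binomial_Suc:
  "(n + 1) * ((2 * (n + 1)) choose (n + 1)) = 2 * (2 * n + 1) * ((2 * n) choose n)"
proof -
  have "(n + 1) * ((2 * (n + 1)) choose (n + 1)) = 2 * ((n + 1) * ((2 * n + 1) choose n))"
    using Suc_times_binomial[of n "2 * n + 1"] by simp
  also have "(2 * n + 1) choose n = (2 * n + 1) choose (n + 1)"
    using central_binomial_odd[of "2 * n + 1"] by simp
  also have "(n + 1) * ((2 * n + 1) choose (n + 1)) = (2 * n + 1) * ((2 * n) choose n)"
    using Suc_times_binomial[of n "2 * n"] by simp
  finally show ?thesis
    by simp
qed

lemma central_binomial_sq_le: "((2 * n) choose n)\<^sup>2 * (2 * n + 1) \<le> 16 ^ n"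
proof (induction n)
  case 0
  show ?case
    by simp
next
  case (Suc n)
  define C where "C = (2 * n) choose n"
  define C' where "C' = (2 * (n + 1)) choose (n + 1)"
  have "(n + 1)\<^sup>2 * (C'\<^sup>2 * (2 * n + 3)) = ((n + 1) * C')\<^sup>2 * (2 * n + 3)"
    by (simp only: power_mult_distrib mult.assoc)
  also have "(n + 1) * C' = 2 * (2 * n + 1) * C"
    unfolding C_def C'_def by (rule central_binomial_Suc)
  also have "(2 * (2 * n + 1) * C)\<^sup>2 * (2 * n + 3) = 4 * (2 * n + 1) * ((2 * n + 1) * (2 * n + 3)) * C\<^sup>2"
    by (simp add: power2_eq_square algebra_simps)
  also have "\<dots> \<le> 4 * (2 * n + 1) * (4 * (n + 1)\<^sup>2) * C\<^sup>2"
    by (intro mult_right_mono mult_left_mono) (auto simp: power2_eq_square algebra_simps)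
  also have "\<dots> = 16 * (n + 1)\<^sup>2 * (C\<^sup>2 * (2 * n + 1))"
    by (simp add: algebra_simps)
  also have "\<dots> \<le> (n + 1)\<^sup>2 * 16 ^ Suc n"
    using Suc.IH unfolding C_def by simp
  finally have "C'\<^sup>2 * (2 * n + 3) \<le> 16 ^ Suc n"
    by (simp del: power_Suc)
  then show ?case
    unfolding C'_def by (simp add: algebra_simps del: power_Suc)
qed

lemma middle_binomial_sq_le: "(N choose (N div 2))\<^sup>2 * (N + 1) \<le> 4 ^ N"
proof (cases "even N")
  case True
  then obtain n where N: "N = 2 * n"
    by blast
  show ?thesis
    using central_binomial_sq_le[of n] by (simp add: N power_mult)
next
  case False
  then obtain n where N: "N = 2 * n + 1"
    using oddE by blast
  define X where "X = N choose n"
  have central: "(2 * (n + 1)) choose (n + 1) = 2 * X"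
    using central_binomial_odd[of N] by (simp add: N X_def)
  have "4 * (X\<^sup>2 * (N + 1)) \<le> (2 * X)\<^sup>2 * (2 * (n + 1) + 1)"
    by (simp add: N power_mult_distrib)
  also have "\<dots> \<le> 16 ^ (n + 1)"
    using central_binomial_sq_le[of "n + 1"] by (simp only: central)
  also have "\<dots> = 4 * 4 ^ N"
    by (simp add: N power_mult power_add)
  finally show ?thesis
    using N by (simp add: X_def)
qed

definition binomial_half :: "nat \<Rightarrow> int \<Rightarrow> real" where
  "binomial_half N w = (if w < 0 then 0 else real (N choose nat w) / 2 ^ N)"

lemma binomial_half_middle_le: "binomial_half N (int (N div 2)) \<le> 1 / sqrt (real N + 1)"
proof -
  have "(4::real) ^ N = (2 ^ N)\<^sup>2"
    by (simp add: power2_eq_square flip: power_mult_distrib)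
  then have "(real (N choose (N div 2)) * sqrt (real N + 1))\<^sup>2 \<le> (2 ^ N)\<^sup>2"
    using of_nat_mono[OF middle_binomial_sq_le[of N], where 'a = real]
    by (simp add: power_mult_distrib algebra_simps)
  then have "real (N choose (N div 2)) * sqrt (real N + 1) \<le> 2 ^ N"
    by (rule power2_le_imp_le) simp
  then show ?thesis
    unfolding binomial_half_def by (simp add: field_simps)
qed

lemma sum_abs_diff_unimodal:
  fixes f :: "nat \<Rightarrow> real"
  assumes "p \<le> Suc M"
    and "\<And>i. i < p \<Longrightarrow> f i \<le> f (Suc i)" and "\<And>i. p \<le> i \<Longrightarrow> f (Suc i) \<le> f i"
  shows "(\<Sum>i\<le>M. \<bar>f (Suc i) - f i\<bar>) = 2 * f p - f 0 - f (Suc M)"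
proof -
  have split: "{..M} = {..<p} \<union> {p..M}"
    using assms(1) by auto
  have "(\<Sum>i\<le>M. \<bar>f (Suc i) - f i\<bar>) =
      (\<Sum>i<p. \<bar>f (Suc i) - f i\<bar>) + (\<Sum>i=p..M. \<bar>f (Suc i) - f i\<bar>)"
    unfolding split by (rule sum.union_disjoint) auto
  also have "\<dots> = (\<Sum>i<p. f (Suc i) - f i) - (\<Sum>i=p..M. f (Suc i) - f i)"
    using assms(2,3) by (simp add: sum_negf[symmetric])
  also have "\<dots> = 2 * f p - f 0 - f (Suc M)"
    using assms(1) by (simp add: sum_lessThan_telescope sum_Suc_diff)
  finally show ?thesis .
qed

lemma binomial_half_variation:
  "(\<Sum>w\<in>{0..int N + 1}. \<bar>binomial_half N w - binomial_half N (w - 1)\<bar>) \<le> 2 / sqrt (real N + 1)"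
proof -
  define f where "f i = binomial_half N (int i - 1)" for i
  have "(\<Sum>w\<in>{0..int N + 1}. \<bar>binomial_half N w - binomial_half N (w - 1)\<bar>) =
      (\<Sum>i\<le>N + 1. \<bar>f (Suc i) - f i\<bar>)"
  proof -
    have "{0..int N + 1} = int ` {..N + 1}"
      using image_int_atLeastAtMost[of 0 "N + 1"] by (simp add: atMost_atLeast0)
    then show ?thesis
      by (simp add: f_def sum.reindex)
  qed
  also have "\<dots> = 2 * f (N div 2 + 1) - f 0 - f (Suc (N + 1))"
  proof (rule sum_abs_diff_unimodal)
    show "f i \<le> f (Suc i)" if "i < N div 2 + 1" for i
      using that by (cases i) (auto simp: f_def binomial_half_def nat_add_distrib
        intro!: divide_right_mono binomial_mono)
    show "f (Suc i) \<le> f i" if "N div 2 + 1 \<le> i" for i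
    proof (cases "i \<le> N")
      case True
      then show ?thesis
        using that by (auto simp: f_def binomial_half_def nat_diff_distrib
          intro!: divide_right_mono binomial_antimono)
    qed (simp add: f_def binomial_half_def binomial_eq_0)
  qed simp
  also have "\<dots> = 2 * binomial_half N (int (N div 2))"
    by (simp add: f_def binomial_half_def nat_add_distrib)
  also have "\<dots> \<le> 2 / sqrt (real N + 1)"
    using binomial_half_middle_le[of N] by simp
  finally show ?thesis .
qed

lemma inj_on_diff_residue_class:
  fixes d t :: nat
  assumes "t \<le> d"
  shows "inj_on (\<lambda>(u, i). u - int i) ({u\<in>U. int d dvd u + r} \<times> {..<t})"
proof (rule inj_onI)
  fix x y
  assume "x \<in> {u\<in>U. int d dvd u + r} \<times> {..<t}" "y \<in> {u\<in>U. int d dvd u + r} \<times> {..<t}"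
    and eq: "(\<lambda>(u, i). u - int i) x = (\<lambda>(u, i). u - int i) y"
  moreover obtain u i u' i' where xy: "x = (u, i)" "y = (u', i')"
    by fastforce
  ultimately have dvd: "int d dvd u + r" "int d dvd u' + r" and "i < t" "i' < t"
    and diff: "u - int i = u' - int i'"
    by auto
  have "int d dvd u - u'"
    using dvd_diff[OF dvd] by simp
  moreover have "\<bar>u - u'\<bar> < int d"
    using diff \<open>i < t\<close> \<open>i' < t\<close> assms by linarith
  ultimately have "u = u'"
    using dvd_imp_le_int[of "u - u'" "int d"] by fastforce
  then show "x = y"
    using diff xy by simp
qed

lemma abs_sum_residue_class_shift_le:
  fixes f :: "int \<Rightarrow> real" and U :: "int set" and d t :: nat
  assumes "finite U" and "t \<le> d" and f_zero: "\<And>w. w \<notin> {0..M} \<Longrightarrow> f w = 0"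
  shows "\<bar>\<Sum>u\<in>U. if int d dvd u + r then f u - f (u - int t) else 0\<bar>
    \<le> (\<Sum>w\<in>{0..M + 1}. \<bar>f w - f (w - 1)\<bar>)"
proof -
  define g where "g w = \<bar>f w - f (w - 1)\<bar>" for w
  define V where "V = {u\<in>U. int d dvd u + r}"
  define D where "D = (\<lambda>(u, i). u - int i) ` (V \<times> {..<t})"
  have "f u - f (u - int t) = (\<Sum>i<t. f (u - int i) - f (u - int i - 1))" for u t
    by (induction t) (simp_all add: algebra_simps)
  then have telescope: "\<bar>f u - f (u - int t)\<bar> \<le> (\<Sum>i<t. g (u - int i))" for u
    unfolding g_def by (simp only: sum_abs)
  have "finite D"
    using assms(1) by (simp add: D_def V_def)
  have g_zero: "g w = 0" if "w \<notin> {0..M + 1}" for w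
    using that f_zero[of w] f_zero[of "w - 1"] by (auto simp: g_def)
  have "\<bar>\<Sum>u\<in>U. if int d dvd u + r then f u - f (u - int t) else 0\<bar> = \<bar>\<Sum>u\<in>V. f u - f (u - int t)\<bar>"
    using assms(1) by (simp add: V_def sum.inter_filter)
  also have "\<dots> \<le> (\<Sum>u\<in>V. \<Sum>i<t. g (u - int i))"
    by (rule order_trans[OF sum_abs sum_mono[OF telescope]])
  also have "\<dots> = (\<Sum>w\<in>D. g w)"
    using sum.reindex[OF inj_on_diff_residue_class[OF assms(2), where U = U and r = r], of g]
    by (simp add: D_def V_def sum.cartesian_product case_prod_unfold comp_def)
  also have "\<dots> \<le> (\<Sum>w\<in>D \<union> {0..M + 1}. g w)"
    by (rule sum_mono2) (auto simp: \<open>finite D\<close> g_def)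
  also have "\<dots> = (\<Sum>w\<in>{0..M + 1}. g w)"
    by (rule sum.mono_neutral_right) (auto simp: \<open>finite D\<close> g_zero)
  finally show ?thesis
    unfolding g_def .
qed

lemma expectation_binomial_half:
  "measure_pmf.expectation (binomial_pmf N (1/2)) g =
    (\<Sum>u\<in>{0..int N}. binomial_half N u * g (nat u))"
proof -
  have "measure_pmf.expectation (binomial_pmf N (1/2)) g =
      (\<Sum>l\<le>N. (real (N choose l) * (1/2) ^ l * (1 - 1/2) ^ (N - l)) *\<^sub>R g l)"
    by (rule expectation_binomial_pmf') simp
  also have "\<dots> = (\<Sum>l\<le>N. binomial_half N (int l) * g l)"
  proof (rule sum.cong)
    fix l assume "l \<in> {..N}"
    then have "(1/2::real) ^ l * (1/2) ^ (N - l) = 1 / 2 ^ N"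
      by (simp add: power_one_over flip: power_add)
    then show "(real (N choose l) * (1/2) ^ l * (1 - 1/2) ^ (N - l)) *\<^sub>R g l =
        binomial_half N (int l) * g l"
      by (simp add: binomial_half_def mult.assoc)
  qed simp
  also have "\<dots> = (\<Sum>u\<in>{0..int N}. binomial_half N u * g (nat u))"
  proof -
    have "{0..int N} = int ` {..N}"
      using image_int_atLeastAtMost[of 0 N] by (simp add: atMost_atLeast0)
    then show ?thesis
      by (simp add: sum.reindex)
  qed
  finally show ?thesis .
qed

lemma expectation_binomial_half_dvd:
  fixes d t :: nat and U :: "int set"
  assumes "finite U" and "{0..int N + int t} \<subseteq> U"
  shows "measure_pmf.expectation (binomial_pmf N (1/2)) (\<lambda>l. if int d dvd int l + (r + int t) then 1 else 0) =
    (\<Sum>u\<in>U. if int d dvd u + r then binomial_half N (u - int t) else 0)"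
proof -
  have "measure_pmf.expectation (binomial_pmf N (1/2)) (\<lambda>l. if int d dvd int l + (r + int t) then 1 else 0) =
      (\<Sum>u\<in>{int t..int N + int t}. if int d dvd u + r then binomial_half N (u - int t) else 0)"
    unfolding expectation_binomial_half
    by (rule sum.reindex_bij_witness[of _ "\<lambda>u. u - int t" "\<lambda>u. u + int t"]) (auto simp: add_ac)
  also have "\<dots> = (\<Sum>u\<in>U. if int d dvd u + r then binomial_half N (u - int t) else 0)"
    using assms by (intro sum.mono_neutral_left) (auto simp: binomial_half_def)
  finally show ?thesis .
qed

lemma binomial_half_dvd_prob_shift:
  fixes d :: nat and r s :: int
  assumes "d > 0"
  shows "\<bar>measure_pmf.expectation (binomial_pmf N (1/2)) (\<lambda>l. if int d dvd int l + r then 1 else 0)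
      - measure_pmf.expectation (binomial_pmf N (1/2)) (\<lambda>l. if int d dvd int l + s then 1 else 0)\<bar>
    \<le> 2 / sqrt (real N + 1)"
proof -
  define t where "t = nat ((s - r) mod int d)"
  define U where "U = {0..int N + int t}"
  have "t < d"
    using assms by (simp add: t_def nat_less_iff)
  have "s = (r + int t) + int d * ((s - r) div int d)"
    using assms by (simp add: t_def minus_mod_eq_mult_div[symmetric])
  then have "int d dvd int l + s \<longleftrightarrow> int d dvd int l + (r + int t)" for l
    by (metis add.assoc dvd_add_left_iff dvd_triv_left)
  then have "\<bar>measure_pmf.expectation (binomial_pmf N (1/2)) (\<lambda>l. if int d dvd int l + r then 1 else 0)
      - measure_pmf.expectation (binomial_pmf N (1/2)) (\<lambda>l. if int d dvd int l + s then 1 else 0)\<bar> =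
    \<bar>(\<Sum>u\<in>U. if int d dvd u + r then binomial_half N u else 0) -
      (\<Sum>u\<in>U. if int d dvd u + r then binomial_half N (u - int t) else 0)\<bar>"
    using expectation_binomial_half_dvd[of U N 0 d r] expectation_binomial_half_dvd[of U N t d r]
    by (simp add: U_def cong: if_cong)
  also have "\<dots> = \<bar>\<Sum>u\<in>U. if int d dvd u + r then binomial_half N u - binomial_half N (u - int t) else 0\<bar>"
    by (simp only: sum_subtractf[symmetric]) (intro arg_cong[where f = abs] sum.cong; simp)
  also have "\<dots> \<le> (\<Sum>w\<in>{0..int N + 1}. \<bar>binomial_half N w - binomial_half N (w - 1)\<bar>)"
    by (rule abs_sum_residue_class_shift_le) (use \<open>t < d\<close> in \<open>auto simp: U_def binomial_half_def\<close>)
  also have "\<dots> \<le> 2 / sqrt (real N + 1)"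
    by (rule binomial_half_variation)
  finally show ?thesis .
qed

lemma expectation_binomial_inverse_Suc:
  assumes p: "0 < p" "p \<le> 1"
  shows "measure_pmf.expectation (binomial_pmf m p) (\<lambda>N. 1 / (real N + 1)) \<le> 1 / ((real m + 1) * p)"
proof -
  define b where "b n l = real (n choose l) * p ^ l * (1 - p) ^ (n - l)" for n l
  have shift: "b m l / (real l + 1) = b (Suc m) (Suc l) / ((real m + 1) * p)" for l
  proof -
    define C where "C = real (Suc m choose Suc l)"
    have "real (Suc l) * C = real (Suc m) * real (m choose l)"
      unfolding C_def by (metis Suc_times_binomial of_nat_mult)
    then have C_eq: "C = (real m + 1) * real (m choose l) / (real l + 1)"
      by (simp add: field_simps)
    have "b (Suc m) (Suc l) = ((real m + 1) * p) * (b m l / (real l + 1))"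
      unfolding b_def diff_Suc_Suc C_def[symmetric] C_eq by (simp add: field_simps)
    then show ?thesis
      using p by simp
  qed
  have "measure_pmf.expectation (binomial_pmf m p) (\<lambda>N. 1 / (real N + 1)) = (\<Sum>l\<le>m. b m l / (real l + 1))"
    using p by (simp add: expectation_binomial_pmf' b_def)
  also have "\<dots> = (\<Sum>l\<in>Suc ` {..m}. b (Suc m) l) / ((real m + 1) * p)"
    by (simp add: shift sum.reindex sum_divide_distrib)
  also have "\<dots> \<le> (\<Sum>l\<le>Suc m. b (Suc m) l) / ((real m + 1) * p)"
    using p by (intro divide_right_mono sum_mono2) (auto simp: b_def)
  also have "(\<Sum>l\<le>Suc m. b (Suc m) l) = 1"
    using binomial_ring[of p "1 - p" "Suc m"] by (simp add: b_def mult.commute mult.left_commute)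
  finally show ?thesis .
qed

lemma expectation_binomial_inverse_sqrt_Suc:
  assumes p: "0 < p" "p \<le> 1"
  shows "measure_pmf.expectation (binomial_pmf m p) (\<lambda>N. 1 / sqrt (real N + 1)) \<le> 1 / sqrt ((real m + 1) * p)"
proof -
  define L where "L = sqrt ((real m + 1) * p)"
  have L: "L > 0" "L\<^sup>2 = (real m + 1) * p"
    using p by (simp_all add: L_def)
  \<comment> \<open>AM-GM for \<open>L / (N + 1)\<close> and \<open>1 / L\<close>; this \<open>L\<close> balances the two terms after taking expectations\<close>
  have am_gm: "1 / sqrt (real N + 1) \<le> (L * (1 / (real N + 1)) + 1 / L) / 2" for N
  proof -
    define x where "x = 1 / sqrt (real N + 1)"
    have "0 \<le> (L * x - 1)\<^sup>2 / L"
      using L by simp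
    then have "0 \<le> L * x\<^sup>2 - 2 * x + 1 / L"
      using L by (simp add: power2_diff field_simps power2_eq_square)
    moreover have "1 / (real N + 1) = x\<^sup>2"
      by (simp add: x_def power_divide)
    ultimately show ?thesis
      unfolding x_def[symmetric] by simp
  qed
  have "measure_pmf.expectation (binomial_pmf m p) (\<lambda>N. 1 / sqrt (real N + 1)) \<le>
      measure_pmf.expectation (binomial_pmf m p) (\<lambda>N. (L * (1 / (real N + 1)) + 1 / L) / 2)"
    by (rule integral_mono) (use p am_gm in auto)
  also have "\<dots> = (L * measure_pmf.expectation (binomial_pmf m p) (\<lambda>N. 1 / (real N + 1)) + 1 / L) / 2"
    using p integral_mult_right_zero[of "binomial_pmf m p" L "\<lambda>N. 1 / (real N + 1)"]
    by (simp add: integrable_measure_pmf_finite)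
  also have "\<dots> \<le> (L * (1 / ((real m + 1) * p)) + 1 / L) / 2"
    using expectation_binomial_inverse_Suc[OF p, of m] L
    by (intro divide_right_mono add_right_mono mult_left_mono) auto
  also have "\<dots> = 1 / L"
    unfolding L(2)[symmetric] using L(1) by (simp add: field_simps power2_eq_square)
  finally show ?thesis
    unfolding L_def .
qed

section \<open>Steps and coordinate counts of the walk\<close>

lemma pmf_embed_pmf_finite:
  fixes f :: "nat \<Rightarrow> real"
  assumes "\<And>j. 0 \<le> f j" and "\<And>j. k \<le> j \<Longrightarrow> f j = 0" and "(\<Sum>j<k. f j) = 1"
  shows "pmf (embed_pmf f) j = f j"
proof -
  have "(\<integral>\<^sup>+x. ennreal (f x) \<partial>count_space UNIV) = (\<Sum>x<k. ennreal (f x))"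
    by (rule nn_integral_count_space') (use assms in \<open>auto simp: not_less\<close>)
  also have "\<dots> = 1"
    using assms by (simp add: sum_ennreal)
  finally show ?thesis
    using assms(1) by (simp add: pmf_embed_pmf)
qed

lemma valid_typeD:
  assumes "valid_type k \<alpha>"
  shows "length \<alpha> = k" and "\<And>j. j < k \<Longrightarrow> 0 < \<alpha> ! j" and "(\<Sum>j<k. \<alpha> ! j) = 1"
  using assms by (auto simp: valid_type_def sum_list_sum_nth atLeast0LessThan)

lemma pmf_step_pmf:
  assumes "valid_type k \<alpha>"
  shows "pmf (step_pmf \<alpha>) j = (if j < k then \<alpha> ! j else 0)"
  unfolding step_pmf_def valid_typeD(1)[OF assms]
proof (rule pmf_embed_pmf_finite)
  show "(\<Sum>j<k. if j < k then \<alpha> ! j else 0) = 1"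
    using valid_typeD(3)[OF assms] by simp
qed (use valid_typeD(2)[OF assms] in \<open>auto intro: less_imp_le\<close>)

lemma set_pmf_step_pmf:
  assumes "valid_type k \<alpha>"
  shows "set_pmf (step_pmf \<alpha>) = {..<k}"
  using pmf_step_pmf[OF assms] valid_typeD(2)[OF assms] by (force simp: set_pmf_eq)

lemma steps_pmf_add:
  "steps_pmf ch (i + m) =
    bind_pmf (steps_pmf ch i) (\<lambda>ws. map_pmf (\<lambda>vs. ws @ vs) (steps_pmf (\<lambda>t. ch (i + t)) m))"
proof (induction m)
  case 0
  show ?case
    by (simp add: map_pmf_def bind_return_pmf bind_return_pmf')
next
  case (Suc m)
  then show ?case
    by (simp add: map_pmf_def bind_assoc_pmf bind_return_pmf)
qed

lemma length_of_set_pmf_steps_pmf: "ws \<in> set_pmf (steps_pmf ch n) \<Longrightarrow> length ws = n"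
  by (induction n arbitrary: ws) auto

lemma set_pmf_steps_pmf:
  assumes "\<forall>t\<ge>1. valid_type k (ch t)" and "ws \<in> set_pmf (steps_pmf ch n)"
  shows "set ws \<subseteq> {..<k}"
  using assms(2) by (induction n arbitrary: ws) (use assms(1) set_pmf_step_pmf in fastforce)+

lemma finite_set_pmf_steps_pmf:
  assumes "\<forall>t\<ge>1. valid_type k (ch t)"
  shows "finite (set_pmf (steps_pmf ch n))"
proof (induction n)
  case (Suc n)
  have "finite (set_pmf (step_pmf (ch (Suc n))))"
    using assms set_pmf_step_pmf[of k "ch (Suc n)"] by simp
  with Suc show ?case
    by simp
qed simp

lemma expectation_steps_pmf_take:
  fixes f :: "nat list \<Rightarrow> real"
  assumes "m \<le> n" and "\<And>ws. \<bar>f ws\<bar> \<le> B"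
  shows "measure_pmf.expectation (steps_pmf ch n) (\<lambda>ws. f (take m ws)) =
    measure_pmf.expectation (steps_pmf ch m) f"
proof -
  obtain l where n: "n = m + l"
    using assms(1) le_Suc_ex by blast
  have "measure_pmf.expectation (steps_pmf ch n) (\<lambda>ws. f (take m ws)) =
      measure_pmf.expectation (steps_pmf ch m) (\<lambda>ws. measure_pmf.expectation
        (map_pmf (\<lambda>vs. ws @ vs) (steps_pmf (\<lambda>t. ch (m + t)) l)) (\<lambda>ws. f (take m ws)))"
    unfolding n steps_pmf_add by (rule expectation_bind_pmf_bounded) (rule assms)
  also have "\<dots> = measure_pmf.expectation (steps_pmf ch m) f"
  proof (rule expectation_cong_pmf)
    fix ws assume "ws \<in> set_pmf (steps_pmf ch m)"
    then have "length ws = m"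
      by (rule length_of_set_pmf_steps_pmf)
    then show "measure_pmf.expectation (map_pmf (\<lambda>vs. ws @ vs) (steps_pmf (\<lambda>t. ch (m + t)) l))
        (\<lambda>ws. f (take m ws)) = f ws"
      by simp
  qed
  finally show ?thesis .
qed

lemma expectation_steps_pmf_split:
  fixes f :: "nat list \<Rightarrow> nat list \<Rightarrow> real"
  assumes "i + m \<le> n" and "\<And>ws vs. \<bar>f ws vs\<bar> \<le> B"
  shows "measure_pmf.expectation (steps_pmf ch n) (\<lambda>ws. f (take i ws) (take m (drop i ws))) =
    measure_pmf.expectation (steps_pmf ch i)
      (\<lambda>ws. measure_pmf.expectation (steps_pmf (\<lambda>t. ch (i + t)) m) (f ws))"
proof -
  have n: "n = i + (n - i)"
    using assms(1) by simp
  have "measure_pmf.expectation (steps_pmf ch n) (\<lambda>ws. f (take i ws) (take m (drop i ws))) =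
      measure_pmf.expectation (steps_pmf ch i) (\<lambda>ws. measure_pmf.expectation
        (steps_pmf (\<lambda>t. ch (i + t)) (n - i)) (\<lambda>vs. f (take i (ws @ vs)) (take m (drop i (ws @ vs)))))"
    by (subst n, subst steps_pmf_add, subst expectation_bind_pmf_bounded[where B = B]) (simp_all add: assms(2))
  also have "\<dots> = measure_pmf.expectation (steps_pmf ch i)
      (\<lambda>ws. measure_pmf.expectation (steps_pmf (\<lambda>t. ch (i + t)) m) (f ws))"
  proof (rule expectation_cong_pmf)
    fix ws
    assume "ws \<in> set_pmf (steps_pmf ch i)"
    then have "length ws = i"
      by (rule length_of_set_pmf_steps_pmf)
    then have "(\<lambda>vs. f (take i (ws @ vs)) (take m (drop i (ws @ vs)))) = (\<lambda>vs. f ws (take m vs))"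
      by simp
    moreover have "measure_pmf.expectation (steps_pmf (\<lambda>t. ch (i + t)) (n - i)) (\<lambda>vs. f ws (take m vs)) =
        measure_pmf.expectation (steps_pmf (\<lambda>t. ch (i + t)) m) (f ws)"
      by (rule expectation_steps_pmf_take[where B = B]) (use assms in auto)
    ultimately show "measure_pmf.expectation (steps_pmf (\<lambda>t. ch (i + t)) (n - i))
        (\<lambda>vs. f (take i (ws @ vs)) (take m (drop i (ws @ vs)))) =
      measure_pmf.expectation (steps_pmf (\<lambda>t. ch (i + t)) m) (f ws)"
      by simp
  qed
  finally show ?thesis .
qed

definition counts :: "nat list \<Rightarrow> nat \<Rightarrow> int" where
  "counts ws c = int (count_list ws c)"

lemma counts_Nil [simp]: "counts [] = 0"
  by (simp add: counts_def fun_eq_iff)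

lemma counts_append [simp]: "counts (xs @ ys) = counts xs + counts ys"
  by (simp add: counts_def fun_eq_iff)

lemma sum_counts:
  assumes "set ws \<subseteq> {..<k}"
  shows "(\<Sum>c<k. counts ws c) = int (length ws)"
  using assms
proof (induction ws)
  case (Cons w ws)
  then have "(\<Sum>c<k. counts (w # ws) c) = (\<Sum>c<k. (if c = w then 1 else 0) + counts ws c)"
    by (intro sum.cong) (auto simp: counts_def)
  with Cons show ?case
    by (simp add: sum.distrib)
qed simp

lemma sum_counts_of_set_pmf_steps_pmf:
  assumes "\<forall>t\<ge>1. valid_type k (ch t)" and "ws \<in> set_pmf (steps_pmf ch n)"
  shows "(\<Sum>c<k. counts ws c) = int n"
  using sum_counts[OF set_pmf_steps_pmf[OF assms]] length_of_set_pmf_steps_pmf[OF assms(2)] by simp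

section \<open>Probability that a modulus divides every coordinate\<close>

definition move :: "nat \<Rightarrow> nat \<Rightarrow> int \<Rightarrow> (nat \<Rightarrow> int) \<Rightarrow> nat \<Rightarrow> int" where
  "move a b t z c = z c + (if c = a then t else 0) - (if c = b then t else 0)"

definition dvd_prob :: "nat \<Rightarrow> (nat \<Rightarrow> real list) \<Rightarrow> nat \<Rightarrow> nat \<Rightarrow> (nat \<Rightarrow> int) \<Rightarrow> real" where
  "dvd_prob k ch m d x = measure_pmf.expectation (steps_pmf ch m)
    (\<lambda>vs. if \<forall>c<k. int d dvd x c + counts vs c then 1 else 0)"

locale coin_split =
  fixes k a b :: nat and h :: real
  assumes ab: "a \<noteq> b" "a < k" "b < k" and h: "0 < h" "2 * h < 1"
begin

definition admissible :: "real list \<Rightarrow> bool" where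
  "admissible \<beta> \<longleftrightarrow> valid_type k \<beta> \<and> h \<le> \<beta> ! a \<and> h \<le> \<beta> ! b"

definition coin_pmf :: "nat pmf" where
  "coin_pmf = map_pmf (\<lambda>x. if x then a else b) (bernoulli_pmf (1/2))"

definition rest_pmf :: "real list \<Rightarrow> nat pmf" where
  "rest_pmf \<beta> = embed_pmf (\<lambda>j. if j < k
     then (\<beta> ! j - (if j = a then h else 0) - (if j = b then h else 0)) / (1 - 2 * h) else 0)"

lemma pmf_coin_pmf: "pmf coin_pmf j = (if j = a then 1/2 else 0) + (if j = b then 1/2 else 0)"
proof -
  have inj: "inj (\<lambda>x. if x then a else b)"
    using ab by (auto simp: inj_def split: if_splits)
  consider "j = a" | "j = b" | "j \<noteq> a" "j \<noteq> b"
    by blast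
  then show ?thesis
  proof cases
    case 1
    then show ?thesis
      using pmf_map_inj'[OF inj, of _ True] ab unfolding coin_pmf_def by simp
  next
    case 2
    then show ?thesis
      using pmf_map_inj'[OF inj, of _ False] ab unfolding coin_pmf_def by simp
  next
    case 3
    then have "j \<notin> set_pmf coin_pmf"
      unfolding coin_pmf_def by auto
    then show ?thesis
      using 3 by (simp add: set_pmf_eq)
  qed
qed

lemma pmf_rest_pmf:
  assumes "admissible \<beta>"
  shows "pmf (rest_pmf \<beta>) j = (if j < k
    then (\<beta> ! j - (if j = a then h else 0) - (if j = b then h else 0)) / (1 - 2 * h) else 0)"
  unfolding rest_pmf_def
proof (rule pmf_embed_pmf_finite)
  have v: "valid_type k \<beta>" and "h \<le> \<beta> ! a" "h \<le> \<beta> ! b"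
    using assms by (auto simp: admissible_def)
  then show "0 \<le> (if j < k then (\<beta> ! j - (if j = a then h else 0) - (if j = b then h else 0))
      / (1 - 2 * h) else 0)" for j
    using valid_typeD(2)[OF v, of j] h ab by (auto intro!: divide_nonneg_pos)
  have "(\<Sum>j<k. \<beta> ! j - (if j = a then h else 0) - (if j = b then h else 0)) = 1 - 2 * h"
    using ab valid_typeD(3)[OF v] by (simp add: sum_subtractf)
  then show "(\<Sum>j<k. if j < k then (\<beta> ! j - (if j = a then h else 0) - (if j = b then h else 0))
      / (1 - 2 * h) else 0) = 1"
    using h by (simp flip: sum_divide_distrib)
qed auto

lemma step_pmf_coin_split:
  assumes "admissible \<beta>"
  shows "step_pmf \<beta> = bind_pmf (bernoulli_pmf (2 * h)) (\<lambda>c. if c then coin_pmf else rest_pmf \<beta>)"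
proof (rule pmf_eqI)
  fix j
  have v: "valid_type k \<beta>"
    using assms by (simp add: admissible_def)
  have "pmf (bind_pmf (bernoulli_pmf (2 * h)) (\<lambda>c. if c then coin_pmf else rest_pmf \<beta>)) j =
      pmf coin_pmf j * (2 * h) + pmf (rest_pmf \<beta>) j * (1 - 2 * h)"
    using h by (simp add: pmf_bind)
  also have "\<dots> = pmf (step_pmf \<beta>) j"
    unfolding pmf_coin_pmf pmf_rest_pmf[OF assms] pmf_step_pmf[OF v] using h ab by (auto simp: field_simps)
  finally show "pmf (step_pmf \<beta>) j =
      pmf (bind_pmf (bernoulli_pmf (2 * h)) (\<lambda>c. if c then coin_pmf else rest_pmf \<beta>)) j" ..
qed

definition coin_counts :: "nat \<Rightarrow> (nat \<Rightarrow> int) \<Rightarrow> nat \<Rightarrow> nat \<Rightarrow> int" where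
  "coin_counts N R l c = R c + (if c = a then int l else 0) + (if c = b then int (N - l) else 0)"

text \<open>A pair \<open>(N, R)\<close> drawn from \<open>split_pmf \<beta> m\<close> records how many of the first \<open>m\<close> steps were
  fair coin flips between \<open>a\<close> and \<open>b\<close>, and the coordinate counts of all other steps.\<close>

primrec split_pmf :: "(nat \<Rightarrow> real list) \<Rightarrow> nat \<Rightarrow> (nat \<times> (nat \<Rightarrow> int)) pmf" where
  "split_pmf \<beta> 0 = return_pmf (0, 0)"
| "split_pmf \<beta> (Suc m) = bind_pmf (split_pmf \<beta> m) (\<lambda>(N, R). bind_pmf (bernoulli_pmf (2 * h))
     (\<lambda>c. if c then return_pmf (Suc N, R) else map_pmf (\<lambda>w. (N, R + counts [w])) (rest_pmf (\<beta> (Suc m)))))"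

lemma map_fst_split_pmf: "map_pmf fst (split_pmf \<beta> m) = binomial_pmf m (2 * h)"
proof (induction m)
  case 0
  then show ?case
    using h by (simp add: binomial_pmf_0)
next
  case (Suc m)
  have "map_pmf fst (split_pmf \<beta> (Suc m)) = bind_pmf (map_pmf fst (split_pmf \<beta> m))
      (\<lambda>N. bind_pmf (bernoulli_pmf (2 * h)) (\<lambda>c. return_pmf ((if c then 1 else 0) + N)))"
    by (auto simp: map_bind_pmf map_pmf_comp map_pmf_const bind_map_pmf case_prod_beta
        intro!: bind_pmf_cong)
  also have "\<dots> = binomial_pmf (Suc m) (2 * h)"
    unfolding Suc using h
    by (subst binomial_pmf_Suc) (auto simp: bind_commute_pmf[of "binomial_pmf m (2 * h)"] add.commute)
  finally show ?case .
qed

lemma coin_step_after_binomial: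
  "bind_pmf (binomial_pmf N (1/2)) (\<lambda>l. map_pmf (\<lambda>w. coin_counts N R l + counts [w]) coin_pmf) =
    map_pmf (coin_counts (Suc N) R) (binomial_pmf (Suc N) (1/2))"
proof -
  have "map_pmf (coin_counts (Suc N) R) (binomial_pmf (Suc N) (1/2)) =
      bind_pmf (bernoulli_pmf (1/2)) (\<lambda>x. bind_pmf (binomial_pmf N (1/2))
        (\<lambda>l. return_pmf (coin_counts (Suc N) R ((if x then 1 else 0) + l))))"
    by (subst binomial_pmf_Suc) (auto simp: map_bind_pmf)
  also have "\<dots> = bind_pmf (bernoulli_pmf (1/2)) (\<lambda>x. bind_pmf (binomial_pmf N (1/2))
      (\<lambda>l. return_pmf (coin_counts N R l + counts [if x then a else b])))"
  proof (intro bind_pmf_cong refl)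
    fix x :: bool and l
    assume "l \<in> set_pmf (binomial_pmf N (1/2))"
    then show "return_pmf (coin_counts (Suc N) R ((if x then 1 else 0) + l)) =
        return_pmf (coin_counts N R l + counts [if x then a else b])"
      using ab by (auto simp: coin_counts_def counts_def fun_eq_iff of_nat_diff)
  qed
  also have "\<dots> = bind_pmf (binomial_pmf N (1/2)) (\<lambda>l. map_pmf (\<lambda>w. coin_counts N R l + counts [w]) coin_pmf)"
    unfolding coin_pmf_def map_pmf_def bind_assoc_pmf bind_return_pmf by (rule bind_commute_pmf)
  finally show ?thesis ..
qed

lemma step_after_binomial:
  assumes "admissible \<beta>"
  shows "bind_pmf (binomial_pmf N (1/2)) (\<lambda>l. map_pmf (\<lambda>w. coin_counts N R l + counts [w]) (step_pmf \<beta>)) =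
    bind_pmf (bernoulli_pmf (2 * h)) (\<lambda>c. if c then map_pmf (coin_counts (Suc N) R) (binomial_pmf (Suc N) (1/2))
      else bind_pmf (rest_pmf \<beta>) (\<lambda>w. map_pmf (coin_counts N (R + counts [w])) (binomial_pmf N (1/2))))"
proof -
  have rest: "bind_pmf (binomial_pmf N (1/2)) (\<lambda>l. map_pmf (\<lambda>w. coin_counts N R l + counts [w]) (rest_pmf \<beta>)) =
      bind_pmf (rest_pmf \<beta>) (\<lambda>w. map_pmf (coin_counts N (R + counts [w])) (binomial_pmf N (1/2)))"
    unfolding map_pmf_def
    by (subst bind_commute_pmf) (auto simp: coin_counts_def fun_eq_iff intro!: bind_pmf_cong)
  show ?thesis
    unfolding step_pmf_coin_split[OF assms] map_bind_pmf
    by (subst bind_commute_pmf) (auto simp: coin_step_after_binomial rest intro!: bind_pmf_cong)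
qed

lemma counts_steps_pmf_split:
  assumes "\<forall>t\<ge>1. admissible (\<beta> t)"
  shows "map_pmf counts (steps_pmf \<beta> m) =
    bind_pmf (split_pmf \<beta> m) (\<lambda>(N, R). map_pmf (coin_counts N R) (binomial_pmf N (1/2)))"
proof (induction m)
  case 0
  have "coin_counts 0 0 0 = 0"
    by (simp add: coin_counts_def fun_eq_iff)
  then show ?case
    by (simp add: binomial_pmf_0 bind_return_pmf)
next
  case (Suc m)
  have "map_pmf counts (steps_pmf \<beta> (Suc m)) =
      bind_pmf (map_pmf counts (steps_pmf \<beta> m)) (\<lambda>R'. map_pmf (\<lambda>w. R' + counts [w]) (step_pmf (\<beta> (Suc m))))"
    by (simp add: map_bind_pmf map_pmf_comp bind_map_pmf)
  also have "\<dots> = bind_pmf (split_pmf \<beta> m) (\<lambda>(N, R). bind_pmf (binomial_pmf N (1/2))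
      (\<lambda>l. map_pmf (\<lambda>w. coin_counts N R l + counts [w]) (step_pmf (\<beta> (Suc m)))))"
    unfolding Suc by (simp add: bind_assoc_pmf bind_map_pmf case_prod_beta case_prod_beta')
  also have "\<dots> = bind_pmf (split_pmf \<beta> (Suc m)) (\<lambda>(N, R). map_pmf (coin_counts N R) (binomial_pmf N (1/2)))"
    using assms by (simp add: step_after_binomial bind_assoc_pmf case_prod_beta case_prod_beta'
        bind_return_pmf bind_map_pmf
        if_distrib[of "\<lambda>M. bind_pmf M _"] cong: if_cong)
  finally show ?case .
qed

lemma dvd_coin_counts_iff:
  fixes w z :: "nat \<Rightarrow> int"
  assumes "l \<le> N" and "\<And>c. c \<noteq> a \<Longrightarrow> c \<noteq> b \<Longrightarrow> w c = z c" and "w a + w b = z a + z b"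
  shows "(\<forall>c<k. int d dvd coin_counts N w l c) \<longleftrightarrow>
    (\<forall>c<k. c \<noteq> a \<longrightarrow> c \<noteq> b \<longrightarrow> int d dvd z c) \<and> int d dvd z a + z b + int N \<and> int d dvd int l + w a"
proof -
  have at_a: "coin_counts N w l a = int l + w a"
    using ab by (simp add: coin_counts_def)
  have at_ab: "coin_counts N w l a + coin_counts N w l b = z a + z b + int N"
    using ab assms by (simp add: coin_counts_def of_nat_diff)
  have elsewhere: "coin_counts N w l c = z c" if "c \<noteq> a" "c \<noteq> b" for c
    using that assms(2) by (simp add: coin_counts_def)
  have "int d dvd coin_counts N w l b \<longleftrightarrow> int d dvd z a + z b + int N"
    if "int d dvd coin_counts N w l a"
    using that by (metis at_ab dvd_add_right_iff)
  then show ?thesis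
    using ab by (metis at_a elsewhere)
qed

definition coin_dvd_prob :: "nat \<Rightarrow> nat \<Rightarrow> (nat \<Rightarrow> int) \<Rightarrow> real" where
  "coin_dvd_prob d N z = measure_pmf.expectation (binomial_pmf N (1/2))
    (\<lambda>l. if \<forall>c<k. int d dvd coin_counts N z l c then 1 else 0)"

lemma abs_coin_dvd_prob_le: "\<bar>coin_dvd_prob d N z\<bar> \<le> 1"
  unfolding coin_dvd_prob_def by (rule abs_expectation_le_pmf) simp

lemma coin_dvd_prob_move_le:
  assumes "d > 0"
  shows "\<bar>coin_dvd_prob d N z - coin_dvd_prob d N (move a b t z)\<bar> \<le> 2 / sqrt (real N + 1)"
proof -
  define P where "P \<longleftrightarrow> (\<forall>c<k. c \<noteq> a \<longrightarrow> c \<noteq> b \<longrightarrow> int d dvd z c) \<and> int d dvd z a + z b + int N"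
  have reduce: "coin_dvd_prob d N w =
      measure_pmf.expectation (binomial_pmf N (1/2)) (\<lambda>l. if P \<and> int d dvd int l + w a then 1 else 0)"
    if "\<And>c. c \<noteq> a \<Longrightarrow> c \<noteq> b \<Longrightarrow> w c = z c" "w a + w b = z a + z b" for w
    unfolding coin_dvd_prob_def
    by (rule expectation_cong_pmf) (simp add: P_def dvd_coin_counts_iff[OF _ that])
  have "move a b t z a = z a + t"
    using ab by (simp add: move_def)
  moreover have "\<bar>measure_pmf.expectation (binomial_pmf N (1/2)) (\<lambda>l. if P \<and> int d dvd int l + z a then 1 else 0)
      - measure_pmf.expectation (binomial_pmf N (1/2)) (\<lambda>l. if P \<and> int d dvd int l + (z a + t) then 1 else 0)\<bar>
      \<le> 2 / sqrt (real N + 1)"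
    using binomial_half_dvd_prob_shift[OF assms, of N "z a" "z a + t"] by (cases P) simp_all
  ultimately show ?thesis
    using ab by (subst (1 2) reduce) (auto simp: move_def)
qed

lemma dvd_prob_eq_expectation_split_pmf:
  assumes "\<forall>t\<ge>1. admissible (\<beta> t)"
  shows "dvd_prob k \<beta> m d y = measure_pmf.expectation (split_pmf \<beta> m) (\<lambda>p. coin_dvd_prob d (fst p) (y + snd p))"
proof -
  have "dvd_prob k \<beta> m d y = measure_pmf.expectation (map_pmf counts (steps_pmf \<beta> m))
      (\<lambda>v. if \<forall>c<k. int d dvd y c + v c then 1 else 0)"
    by (simp add: dvd_prob_def)
  also have "\<dots> = measure_pmf.expectation (split_pmf \<beta> m) (\<lambda>p. measure_pmf.expectation
      (map_pmf (coin_counts (fst p) (snd p)) (binomial_pmf (fst p) (1/2)))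
      (\<lambda>v. if \<forall>c<k. int d dvd y c + v c then 1 else 0))"
    unfolding counts_steps_pmf_split[OF assms]
    by (subst expectation_bind_pmf_bounded[where B = 1]) (simp_all add: case_prod_unfold)
  also have "\<dots> = measure_pmf.expectation (split_pmf \<beta> m) (\<lambda>p. coin_dvd_prob d (fst p) (y + snd p))"
    by (simp add: coin_dvd_prob_def coin_counts_def add.assoc)
  finally show ?thesis .
qed

lemma dvd_prob_move_le:
  assumes "\<forall>t\<ge>1. admissible (\<beta> t)" and "d > 0"
  shows "\<bar>dvd_prob k \<beta> m d x - dvd_prob k \<beta> m d (move a b t x)\<bar> \<le> 2 / sqrt ((real m + 1) * (2 * h))"
proof -
  have move_add: "move a b t x + R = move a b t (x + R)" for R
    by (simp add: move_def fun_eq_iff)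
  have "\<bar>dvd_prob k \<beta> m d x - dvd_prob k \<beta> m d (move a b t x)\<bar> \<le>
      measure_pmf.expectation (split_pmf \<beta> m) (\<lambda>p. 2 / sqrt (real (fst p) + 1))"
    unfolding dvd_prob_eq_expectation_split_pmf[OF assms(1)] move_add
  proof (intro abs_expectation_diff_le_pmf[where B = 1 and B' = 2] abs_coin_dvd_prob_le)
    show "\<bar>2 / sqrt (real (fst p) + 1)\<bar> \<le> 2" for p :: "nat \<times> (nat \<Rightarrow> int)"
      by (simp add: divide_le_eq)
  qed (rule coin_dvd_prob_move_le[OF assms(2)])
  also have "\<dots> = measure_pmf.expectation (map_pmf fst (split_pmf \<beta> m)) (\<lambda>N. 2 / sqrt (real N + 1))"
    by simp
  also have "\<dots> = 2 * measure_pmf.expectation (binomial_pmf m (2 * h)) (\<lambda>N. 1 / sqrt (real N + 1))"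
    unfolding map_fst_split_pmf by (subst integral_mult_right_zero[symmetric]) simp
  also have "\<dots> \<le> 2 / sqrt ((real m + 1) * (2 * h))"
    using expectation_binomial_inverse_sqrt_Suc[of "2 * h" m] h by simp
  finally show ?thesis .
qed

end

lemma dvd_prob_cong:
  assumes "\<And>c. c < k \<Longrightarrow> x c = y c"
  shows "dvd_prob k ch m d x = dvd_prob k ch m d y"
  using assms by (simp add: dvd_prob_def)

lemma sum_move:
  assumes "a < k" and "b < k"
  shows "(\<Sum>c<k. move a b t x c) = (\<Sum>c<k. x c)"
  using assms by (simp add: move_def sum.distrib sum_subtractf)

lemma dvd_prob_move_from_0_le:
  assumes "\<forall>t\<ge>1. valid_type k (ch t)" and "\<forall>t\<ge>1. \<forall>j<k. c0 \<le> ch t ! j"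
    and "0 < c0" "c0 \<le> 1/2" and "0 < a" "a < k" and "d > 0"
  shows "\<bar>dvd_prob k ch m d x - dvd_prob k ch m d (move a 0 t x)\<bar> \<le> 2 / sqrt ((real m + 1) * c0)"
proof -
  interpret coin_split k a 0 "c0 / 2"
    by standard (use assms(3-6) in auto)
  have "admissible (ch t)" if "t \<ge> 1" for t
  proof -
    have "c0 \<le> ch t ! a" "c0 \<le> ch t ! 0"
      using assms(2,6) that by auto
    then show ?thesis
      using assms(1,3) that by (simp add: admissible_def)
  qed
  then have "\<forall>t\<ge>1. admissible (ch t)"
    by blast
  from dvd_prob_move_le[OF this assms(7)] show ?thesis
    by simp
qed

lemma dvd_prob_diff_le:
  assumes "\<forall>t\<ge>1. valid_type k (ch t)" and "\<forall>t\<ge>1. \<forall>j<k. c0 \<le> ch t ! j"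
    and "0 < c0" "c0 \<le> 1/2" and "k \<ge> 1" and "d > 0"
    and "(\<Sum>c<k. x c) = (\<Sum>c<k. y c)"
  shows "\<bar>dvd_prob k ch m d x - dvd_prob k ch m d y\<bar> \<le> real (k - 1) * (2 / sqrt ((real m + 1) * c0))"
proof -
  define B where "B = 2 / sqrt ((real m + 1) * c0)"
  \<comment> \<open>Align the coordinates one at a time, from the last one down, moving mass to coordinate \<open>0\<close>.\<close>
  have aligned: "\<bar>dvd_prob k ch m d x - dvd_prob k ch m d y\<bar> \<le> real r * B"
    if "r < k" "(\<Sum>c<k. x c) = (\<Sum>c<k. y c)" "\<And>c. r < c \<Longrightarrow> c < k \<Longrightarrow> x c = y c" for r x y
    using that
  proof (induction r arbitrary: x)
    case 0
    have split: "{..<k} = insert 0 {1..<k}"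
      using "0.prems"(1) by auto
    have "(\<Sum>c\<in>{1..<k}. x c) = (\<Sum>c\<in>{1..<k}. y c)"
      using "0.prems"(3) by (intro sum.cong) auto
    then have "x 0 = y 0"
      using "0.prems"(2) unfolding split by simp
    then have "x c = y c" if "c < k" for c
      using "0.prems"(3)[of c] that by (cases c) auto
    then have "dvd_prob k ch m d x = dvd_prob k ch m d y"
      by (rule dvd_prob_cong)
    then show ?case
      by simp
  next
    case (Suc r)
    define x' where "x' = move (Suc r) 0 (y (Suc r) - x (Suc r)) x"
    have "\<bar>dvd_prob k ch m d x - dvd_prob k ch m d x'\<bar> \<le> B"
      unfolding x'_def B_def by (rule dvd_prob_move_from_0_le) (use assms Suc.prems(1) in auto)
    moreover have "\<bar>dvd_prob k ch m d x' - dvd_prob k ch m d y\<bar> \<le> real r * B"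
    proof (rule Suc.IH)
      show "(\<Sum>c<k. x' c) = (\<Sum>c<k. y c)"
        using Suc.prems(1,2) by (simp add: x'_def sum_move)
      show "x' c = y c" if "r < c" "c < k" for c
        using that Suc.prems(3)[of c] by (cases "c = Suc r") (auto simp: x'_def move_def)
    qed (use Suc.prems(1) in simp)
    ultimately show ?case
      by (simp add: distrib_right abs_le_iff)
  qed
  show ?thesis
    unfolding B_def[symmetric] by (rule aligned) (use assms(5,7) in simp_all)
qed

section \<open>Prime factors and visibility\<close>

lemma Gcd_eq_1_iff_no_prime_divisor:
  fixes S :: "int set"
  shows "Gcd S = 1 \<longleftrightarrow> (\<forall>p::nat. prime p \<longrightarrow> \<not> (\<forall>z\<in>S. int p dvd z))"
proof
  assume "Gcd S = 1"
  show "\<forall>p::nat. prime p \<longrightarrow> \<not> (\<forall>z\<in>S. int p dvd z)"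
  proof (intro allI impI notI)
    fix p :: nat
    assume "prime p" and "\<forall>z\<in>S. int p dvd z"
    then have "int p dvd 1"
      using Gcd_greatest \<open>Gcd S = 1\<close> by metis
    with \<open>prime p\<close> show False
      by simp
  qed
next
  assume no_prime: "\<forall>p::nat. prime p \<longrightarrow> \<not> (\<forall>z\<in>S. int p dvd z)"
  show "Gcd S = 1"
  proof (rule ccontr)
    assume "Gcd S \<noteq> 1"
    then have "nat (Gcd S) \<noteq> 1"
      by (metis Gcd_int_greater_eq_0 int_nat_eq of_nat_1)
    then obtain p where "prime p" "p dvd nat (Gcd S)"
      using prime_factor_nat by blast
    then have "int p dvd Gcd S"
      by (metis Gcd_int_greater_eq_0 int_dvd_int_iff int_nat_eq)
    then have "\<forall>z\<in>S. int p dvd z"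
      by (meson Gcd_dvd dvd_trans)
    with no_prime \<open>prime p\<close> show False
      by blast
  qed
qed

lemma all_primes_dvd_iff_prod_dvd:
  fixes X :: "nat set" and z :: int
  assumes "finite X" and "\<forall>p\<in>X. prime p"
  shows "(\<forall>p\<in>X. int p dvd z) \<longleftrightarrow> int (\<Prod>X) dvd z"
proof
  show "int (\<Prod>X) dvd z \<Longrightarrow> \<forall>p\<in>X. int p dvd z"
    using assms(1) by (meson dvd_prod_eqI dvd_trans int_dvd_int_iff)
next
  show "\<forall>p\<in>X. int p dvd z \<Longrightarrow> int (\<Prod>X) dvd z"
    using assms
  proof (induction X rule: finite_induct)
    case (insert p X)
    have "prime (int p)"
      using insert.prems(2) by simp
    moreover have "\<not> int p dvd (\<Prod>q\<in>X. int q)"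
    proof
      assume "int p dvd (\<Prod>q\<in>X. int q)"
      then obtain q where "q \<in> X" "int p dvd int q"
        using prime_dvd_prod_iff[OF insert.hyps(1) \<open>prime (int p)\<close>] by auto
      then show False
        using insert.hyps(2) insert.prems(2) primes_dvd_imp_eq[of p q] by auto
    qed
    ultimately have "coprime (int p) (\<Prod>q\<in>X. int q)"
      by (rule prime_imp_coprime)
    then have "int p * (\<Prod>q\<in>X. int q) dvd z"
      using insert by (intro divides_mult) auto
    then show ?case
      using insert.hyps by simp
  qed simp
qed

lemma prod_prime_factors_le:
  fixes j :: nat
  assumes "j > 0"
  shows "\<Prod>(prime_factors j) \<le> j"
proof -
  have "int (\<Prod>(prime_factors j)) dvd int j"
    by (subst all_primes_dvd_iff_prod_dvd[symmetric]) (auto simp: in_prime_factors_iff)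
  then have "\<Prod>(prime_factors j) dvd j"
    by (simp only: int_dvd_int_iff)
  then show ?thesis
    using assms by (simp add: dvd_imp_le)
qed

lemma two_pow_card_le_powr:
  fixes \<epsilon> :: real
  assumes "j > 0" and "\<epsilon> > 0" and "P \<subseteq> prime_factors j" and "\<And>p. p \<in> P \<Longrightarrow> 2 \<le> real p powr \<epsilon>"
  shows "2 ^ card P \<le> real j powr \<epsilon>"
proof -
  have "(2::real) ^ card P = (\<Prod>p\<in>P. 2)"
    by simp
  also have "\<dots> \<le> (\<Prod>p\<in>P. real p powr \<epsilon>)"
    using assms(4) by (intro prod_mono) auto
  also have "\<dots> \<le> (\<Prod>p\<in>prime_factors j. real p powr \<epsilon>)"
    using assms(2,3) by (intro prod_mono2)
      (auto simp: in_prime_factors_iff prime_ge_1_nat intro!: ge_one_powr_ge_zero)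
  also have "\<dots> = real (\<Prod>(prime_factors j)) powr \<epsilon>"
    by (simp add: prod_powr_distrib)
  also have "\<dots> \<le> real j powr \<epsilon>"
    using of_nat_mono[OF prod_prime_factors_le[OF assms(1)], where 'a = real] assms(2)
    by (intro powr_mono2) (auto intro: prod_nonneg)
  finally show ?thesis .
qed

lemma two_pow_card_prime_factors_le:
  fixes \<epsilon> :: real
  assumes "\<epsilon> > 0"
  obtains C where "C > 0" and "\<And>j. j > 0 \<Longrightarrow> 2 ^ card (prime_factors j) \<le> C * real j powr \<epsilon>"
proof
  define T where "T = nat \<lceil>2 powr (1 / \<epsilon>)\<rceil>"
  \<comment> \<open>primes from \<open>T\<close> on contribute at most their \<open>\<epsilon>\<close>-th power each; the others at most \<open>2 ^ T\<close> in total\<close>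
  have large: "2 \<le> real p powr \<epsilon>" if "T \<le> p" for p :: nat
  proof -
    have "2 = (2 powr (1 / \<epsilon>)) powr \<epsilon>"
      using assms by (simp add: powr_powr)
    also have "\<dots> \<le> real p powr \<epsilon>"
      using that assms by (intro powr_mono2) (auto simp: T_def le_nat_iff ceiling_le_iff)
    finally show ?thesis .
  qed
  show "(0::real) < 2 ^ T"
    by simp
  fix j :: nat
  assume "j > 0"
  define P where "P = prime_factors j"
  define P\<^sub>1 where "P\<^sub>1 = {p\<in>P. p < T}"
  have "finite P"
    by (simp add: P_def)
  then have "card P = card P\<^sub>1 + card (P - P\<^sub>1)"
    by (simp add: P\<^sub>1_def card_Diff_subset card_mono)
  then have "(2::real) ^ card P = 2 ^ card P\<^sub>1 * 2 ^ card (P - P\<^sub>1)"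
    by (simp add: power_add)
  also have "\<dots> \<le> 2 ^ T * real j powr \<epsilon>"
  proof (intro mult_mono)
    show "(2::real) ^ card P\<^sub>1 \<le> 2 ^ T"
      using card_mono[of "{..<T}" P\<^sub>1] by (auto simp: P\<^sub>1_def)
    show "2 ^ card (P - P\<^sub>1) \<le> real j powr \<epsilon>"
      using \<open>j > 0\<close> assms by (intro two_pow_card_le_powr) (auto simp: P_def P\<^sub>1_def large)
  qed simp_all
  finally show "2 ^ card (prime_factors j) \<le> 2 ^ T * real j powr \<epsilon>"
    unfolding P_def .
qed

lemma prod_indicator_eq:
  assumes "finite P"
  shows "(\<Prod>p\<in>P. if Q p then 1 else 0 :: real) = (if \<forall>p\<in>P. Q p then 1 else 0)"
  using assms by (induction P rule: finite_induct) auto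

lemma visible_iff_no_prime_factor_dvd:
  fixes v :: "nat \<Rightarrow> int"
  assumes "j > 0" and "(\<Sum>c<k. v c) = int j"
  shows "visible (map v [0..<k]) \<longleftrightarrow> (\<forall>p\<in>prime_factors j. \<not> (\<forall>c<k. int p dvd v c))"
proof -
  have "visible (map v [0..<k]) \<longleftrightarrow> (\<forall>p::nat. prime p \<longrightarrow> \<not> (\<forall>c<k. int p dvd v c))"
    unfolding visible_def Gcd_eq_1_iff_no_prime_divisor by (auto simp: atLeast0LessThan)
  also have "\<dots> \<longleftrightarrow> (\<forall>p\<in>prime_factors j. \<not> (\<forall>c<k. int p dvd v c))"
  proof (intro iffI ballI allI impI)
    fix p :: nat
    assume "\<forall>p\<in>prime_factors j. \<not> (\<forall>c<k. int p dvd v c)" and "prime p"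
    moreover have "p \<in> prime_factors j" if "\<forall>c<k. int p dvd v c"
    proof -
      have "int p dvd int j"
        using that assms(2) by (metis dvd_sum lessThan_iff)
      then show ?thesis
        using assms(1) \<open>prime p\<close> by (simp add: in_prime_factors_iff)
    qed
    ultimately show "\<not> (\<forall>c<k. int p dvd v c)"
      by blast
  qed (simp add: in_prime_factors_imp_prime)
  finally show ?thesis .
qed

definition visible_indicator :: "nat \<Rightarrow> (nat \<Rightarrow> int) \<Rightarrow> real" where
  "visible_indicator k v = (if visible (map v [0..<k]) then 1 else 0)"

lemma X_ind_eq_visible_indicator: "X_ind k ws i = visible_indicator k (counts (take i ws))"
  by (simp add: X_ind_def visible_indicator_def walk_pos_def counts_def[abs_def])

lemma visible_indicator_inclusion_exclusion:
  fixes v :: "nat \<Rightarrow> int"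
  assumes "j > 0" and "(\<Sum>c<k. v c) = int j"
  shows "visible_indicator k v =
    (\<Sum>X\<in>Pow (prime_factors j). (-1) ^ card X * (if \<forall>c<k. int (\<Prod>X) dvd v c then 1 else 0))"
proof -
  define P where "P = prime_factors j"
  define A where "A p = (if \<forall>c<k. int p dvd v c then 1 else 0 :: real)" for p
  have fin: "finite P"
    by (simp add: P_def)
  have "(\<Prod>p\<in>P. 1 - A p) = (\<Prod>p\<in>P. if \<not> (\<forall>c<k. int p dvd v c) then 1 else 0)"
    by (intro prod.cong) (auto simp: A_def)
  also have "\<dots> = (if \<forall>p\<in>P. \<not> (\<forall>c<k. int p dvd v c) then 1 else 0)"
    by (rule prod_indicator_eq[OF fin])
  also have "\<dots> = visible_indicator k v"
    unfolding visible_indicator_def P_def visible_iff_no_prime_factor_dvd[OF assms] ..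
  finally have "visible_indicator k v = (\<Prod>p\<in>P. 1 - A p)" ..
  also have "\<dots> = (\<Sum>X\<in>Pow P. (\<Prod>p\<in>X. - A p) * (\<Prod>p\<in>P - X. 1))"
    using prod_add[OF fin, of "\<lambda>p. - A p" "\<lambda>_. 1"] by simp
  also have "\<dots> = (\<Sum>X\<in>Pow P. (-1) ^ card X * (if \<forall>c<k. int (\<Prod>X) dvd v c then 1 else 0))"
  proof (rule sum.cong)
    fix X
    assume "X \<in> Pow P"
    then have "finite X" and "\<forall>p\<in>X. prime p"
      using fin finite_subset by (auto simp: P_def in_prime_factors_iff)
    then have "(\<Prod>p\<in>X. A p) = (if \<forall>c<k. int (\<Prod>X) dvd v c then 1 else 0)"
      unfolding A_def prod_indicator_eq[OF \<open>finite X\<close>]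
      using all_primes_dvd_iff_prod_dvd[OF \<open>finite X\<close> \<open>\<forall>p\<in>X. prime p\<close>] by metis
    then show "(\<Prod>p\<in>X. - A p) * (\<Prod>p\<in>P - X. 1) =
        (-1) ^ card X * (if \<forall>c<k. int (\<Prod>X) dvd v c then 1 else 0)"
      by (simp add: prod.distrib[of "\<lambda>_. -1" A, simplified] prod_constant)
  qed simp
  finally show ?thesis
    by (simp add: P_def)
qed

definition visible_prob :: "nat \<Rightarrow> (nat \<Rightarrow> real list) \<Rightarrow> nat \<Rightarrow> (nat \<Rightarrow> int) \<Rightarrow> real" where
  "visible_prob k ch m x = measure_pmf.expectation (steps_pmf ch m) (\<lambda>vs. visible_indicator k (x + counts vs))"

lemma visible_prob_eq_sum_dvd_prob:
  assumes "\<forall>t\<ge>1. valid_type k (ch t)" and "(\<Sum>c<k. x c) = int i" and "i + m > 0"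
  shows "visible_prob k ch m x = (\<Sum>X\<in>Pow (prime_factors (i + m)). (-1) ^ card X * dvd_prob k ch m (\<Prod>X) x)"
proof -
  have "visible_prob k ch m x = measure_pmf.expectation (steps_pmf ch m) (\<lambda>vs. \<Sum>X\<in>Pow (prime_factors (i + m)).
      (-1) ^ card X * (if \<forall>c<k. int (\<Prod>X) dvd x c + counts vs c then 1 else 0))"
    unfolding visible_prob_def
  proof (rule expectation_cong_pmf)
    fix vs
    assume "vs \<in> set_pmf (steps_pmf ch m)"
    then have "(\<Sum>c<k. (x + counts vs) c) = int (i + m)"
      using assms(2) sum_counts_of_set_pmf_steps_pmf[OF assms(1)] by (simp add: sum.distrib)
    from visible_indicator_inclusion_exclusion[OF assms(3) this] show "visible_indicator k (x + counts vs) =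
        (\<Sum>X\<in>Pow (prime_factors (i + m)).
          (-1) ^ card X * (if \<forall>c<k. int (\<Prod>X) dvd x c + counts vs c then 1 else 0))"
      by (simp add: plus_fun_def)
  qed
  also have "\<dots> = (\<Sum>X\<in>Pow (prime_factors (i + m)). (-1) ^ card X * dvd_prob k ch m (\<Prod>X) x)"
    using finite_set_pmf_steps_pmf[OF assms(1)]
    by (simp add: dvd_prob_def integrable_measure_pmf_finite)
  finally show ?thesis .
qed

lemma visible_prob_diff_le:
  assumes "\<forall>t\<ge>1. valid_type k (ch t)" and "\<forall>t\<ge>1. \<forall>j<k. c0 \<le> ch t ! j"
    and "0 < c0" "c0 \<le> 1/2" and "k \<ge> 1"
    and "(\<Sum>c<k. x c) = int i" and "(\<Sum>c<k. y c) = int i" and "i + m > 0"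
  shows "\<bar>visible_prob k ch m x - visible_prob k ch m y\<bar>
    \<le> 2 ^ card (prime_factors (i + m)) * (real (k - 1) * (2 / sqrt ((real m + 1) * c0)))"
proof -
  define B where "B = real (k - 1) * (2 / sqrt ((real m + 1) * c0))"
  define P where "P = prime_factors (i + m)"
  have "\<bar>visible_prob k ch m x - visible_prob k ch m y\<bar> =
      \<bar>\<Sum>X\<in>Pow P. (-1) ^ card X * (dvd_prob k ch m (\<Prod>X) x - dvd_prob k ch m (\<Prod>X) y)\<bar>"
    unfolding visible_prob_eq_sum_dvd_prob[OF assms(1,6,8)] visible_prob_eq_sum_dvd_prob[OF assms(1,7,8)]
    by (simp add: P_def right_diff_distrib sum_subtractf)
  also have "\<dots> \<le> (\<Sum>X\<in>Pow P. \<bar>dvd_prob k ch m (\<Prod>X) x - dvd_prob k ch m (\<Prod>X) y\<bar>)"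
    by (rule order_trans[OF sum_abs]) (simp add: abs_mult)
  also have "\<dots> \<le> (\<Sum>X\<in>Pow P. B)"
  proof (rule sum_mono)
    fix X
    assume "X \<in> Pow P"
    then have "\<Prod>X > 0"
      by (auto simp: P_def in_prime_factors_iff prime_gt_0_nat intro!: prod_pos)
    then show "\<bar>dvd_prob k ch m (\<Prod>X) x - dvd_prob k ch m (\<Prod>X) y\<bar> \<le> B"
      unfolding B_def using assms by (intro dvd_prob_diff_le) simp_all
  qed
  also have "\<dots> = 2 ^ card P * B"
    by (simp add: P_def card_Pow)
  finally show ?thesis
    by (simp add: B_def P_def)
qed

section \<open>Covariances of the visibility indicators\<close>

lemma X_ind_eq_visible_indicator_add:
  assumes "i \<le> j"
  shows "X_ind k ws j = visible_indicator k (counts (take i ws) + counts (take (j - i) (drop i ws)))"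
  using take_add[of i "j - i" ws] assms by (simp add: X_ind_eq_visible_indicator)

lemma expectation_X_ind_eq_visible_prob:
  assumes "i \<le> j" and "j \<le> n"
  shows "measure_pmf.expectation (steps_pmf ch n) (\<lambda>ws. X_ind k ws j) =
    measure_pmf.expectation (steps_pmf ch i) (\<lambda>ws. visible_prob k (\<lambda>t. ch (i + t)) (j - i) (counts ws))"
  unfolding X_ind_eq_visible_indicator_add[OF assms(1)] visible_prob_def
  by (rule expectation_steps_pmf_split[where B = 1]) (use assms in \<open>auto simp: visible_indicator_def\<close>)

lemma expectation_X_ind_product_eq:
  assumes "\<forall>t\<ge>1. valid_type k (ch t)" and "i \<le> j" and "j \<le> n"
  shows "measure_pmf.expectation (steps_pmf ch n) (\<lambda>ws. (X_ind k ws i - a) * (X_ind k ws j - b)) =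
    measure_pmf.expectation (steps_pmf ch i) (\<lambda>ws. (visible_indicator k (counts ws) - a) *
      (visible_prob k (\<lambda>t. ch (i + t)) (j - i) (counts ws) - b))"
proof -
  have "measure_pmf.expectation (steps_pmf ch n) (\<lambda>ws. (X_ind k ws i - a) * (X_ind k ws j - b)) =
      measure_pmf.expectation (steps_pmf ch i) (\<lambda>ws. measure_pmf.expectation (steps_pmf (\<lambda>t. ch (i + t)) (j - i))
        (\<lambda>vs. (visible_indicator k (counts ws) - a) * (visible_indicator k (counts ws + counts vs) - b)))"
    unfolding X_ind_eq_visible_indicator_add[OF assms(2)] X_ind_eq_visible_indicator[of k _ i]
  proof (rule expectation_steps_pmf_split[where B = "(1 + \<bar>a\<bar>) * (1 + \<bar>b\<bar>)"])
    show "\<bar>(visible_indicator k (counts ws) - a) * (visible_indicator k (counts ws + counts vs) - b)\<bar>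
        \<le> (1 + \<bar>a\<bar>) * (1 + \<bar>b\<bar>)" for ws vs
      unfolding abs_mult by (intro mult_mono) (auto simp: visible_indicator_def)
  qed (use assms in simp)
  also have "\<dots> = measure_pmf.expectation (steps_pmf ch i) (\<lambda>ws. (visible_indicator k (counts ws) - a) *
      (visible_prob k (\<lambda>t. ch (i + t)) (j - i) (counts ws) - b))"
    using finite_set_pmf_steps_pmf[of k "\<lambda>t. ch (i + t)" "j - i"] assms(1)
    by (simp add: integrable_measure_pmf_finite visible_prob_def)
  finally show ?thesis .
qed

lemma covariance_X_ind_le:
  assumes valid: "\<forall>t\<ge>1. valid_type k (ch t)" and "\<forall>t\<ge>1. \<forall>j<k. c0 \<le> ch t ! j"
    and "0 < c0" "c0 \<le> 1/2" "k \<ge> 1" and "1 \<le> i" "i < j" "j \<le> n"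
  shows "\<bar>measure_pmf.expectation (steps_pmf ch n)
      (\<lambda>ws. (X_ind k ws i - measure_pmf.expectation (steps_pmf ch n) (\<lambda>ws. X_ind k ws i)) *
            (X_ind k ws j - measure_pmf.expectation (steps_pmf ch n) (\<lambda>ws. X_ind k ws j)))\<bar>
    \<le> 2 ^ card (prime_factors j) * (real (k - 1) * (2 / sqrt ((real (j - i) + 1) * c0)))"
proof -
  define a where "a = measure_pmf.expectation (steps_pmf ch n) (\<lambda>ws. X_ind k ws i)"
  define G where "G ws = visible_prob k (\<lambda>t. ch (i + t)) (j - i) (counts ws)" for ws
  have "measure_pmf.expectation (steps_pmf ch n) (\<lambda>ws. X_ind k ws j) = measure_pmf.expectation (steps_pmf ch i) G"
    unfolding G_def using assms(7,8) by (intro expectation_X_ind_eq_visible_prob) simp_all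
  moreover have "\<bar>measure_pmf.expectation (steps_pmf ch i)
      (\<lambda>ws. (visible_indicator k (counts ws) - a) * (G ws - measure_pmf.expectation (steps_pmf ch i) G))\<bar>
    \<le> 2 ^ card (prime_factors j) * (real (k - 1) * (2 / sqrt ((real (j - i) + 1) * c0)))"
  proof (rule abs_expectation_mult_centered_le)
    show "finite (set_pmf (steps_pmf ch i))"
      using valid by (rule finite_set_pmf_steps_pmf)
    show "\<bar>visible_indicator k (counts ws) - a\<bar> \<le> 1" for ws
      using expectation_in_unit_interval_pmf[of "\<lambda>ws. X_ind k ws i" "steps_pmf ch n"]
      by (simp add: a_def visible_indicator_def X_ind_def)
    fix ws ws'
    assume "ws \<in> set_pmf (steps_pmf ch i)" and "ws' \<in> set_pmf (steps_pmf ch i)"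
    then have sums: "(\<Sum>c<k. counts ws c) = int i" "(\<Sum>c<k. counts ws' c) = int i"
      by (simp_all add: sum_counts_of_set_pmf_steps_pmf[OF valid])
    have "\<bar>G ws - G ws'\<bar> \<le> 2 ^ card (prime_factors (i + (j - i))) *
        (real (k - 1) * (2 / sqrt ((real (j - i) + 1) * c0)))"
      unfolding G_def by (rule visible_prob_diff_le) (use assms sums in auto)
    then show "\<bar>G ws - G ws'\<bar> \<le> 2 ^ card (prime_factors j) * (real (k - 1) * (2 / sqrt ((real (j - i) + 1) * c0)))"
      using \<open>i < j\<close> by simp
  qed
  ultimately show ?thesis
    using expectation_X_ind_product_eq[OF valid] assms(7,8) by (simp add: a_def G_def)
qed

section \<open>The variance of the mean\<close>

lemma sum_inverse_sqrt_le: "(\<Sum>m<n. 1 / sqrt (real m + 1)) \<le> 2 * sqrt (real n)"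
proof (induction n)
  case (Suc n)
  have "1 = (sqrt (real n + 1) - sqrt (real n)) * (sqrt (real n + 1) + sqrt (real n))"
    by (simp add: algebra_simps)
  also have "\<dots> \<le> (sqrt (real n + 1) - sqrt (real n)) * (2 * sqrt (real n + 1))"
    by (intro mult_left_mono) auto
  finally have "1 \<le> 2 * (sqrt (real n + 1) - sqrt (real n)) * sqrt (real n + 1)"
    by (simp add: algebra_simps)
  then have "1 / sqrt (real n + 1) \<le> 2 * (sqrt (real n + 1) - sqrt (real n))"
    by (simp add: divide_le_eq)
  with Suc show ?case
    by (simp add: add.commute)
qed simp

lemma sum_inverse_sqrt_inj_le:
  fixes g :: "nat \<Rightarrow> nat"
  assumes "finite A" and "inj_on g A" and "g ` A \<subseteq> {..<n}"
  shows "(\<Sum>j\<in>A. 1 / sqrt (real (g j) + 1)) \<le> 2 * sqrt (real n)"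
proof -
  have "(\<Sum>j\<in>A. 1 / sqrt (real (g j) + 1)) = (\<Sum>m\<in>g ` A. 1 / sqrt (real m + 1))"
    using assms(2) by (simp add: sum.reindex)
  also have "\<dots> \<le> (\<Sum>m<n. 1 / sqrt (real m + 1))"
    using assms(3) by (intro sum_mono2) auto
  also have "\<dots> \<le> 2 * sqrt (real n)"
    by (rule sum_inverse_sqrt_le)
  finally show ?thesis .
qed

lemma sum_inverse_sqrt_dist_le:
  assumes "1 \<le> i" and "i \<le> n"
  shows "(\<Sum>j\<in>{1..n}. 1 / sqrt (\<bar>real i - real j\<bar> + 1)) \<le> 4 * sqrt (real n)"
proof -
  define A\<^sub>1 where "A\<^sub>1 = {j\<in>{1..n}. i \<le> j}"
  define A\<^sub>2 where "A\<^sub>2 = {j\<in>{1..n}. j < i}"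
  have split: "{1..n} = A\<^sub>1 \<union> A\<^sub>2"
    by (auto simp: A\<^sub>1_def A\<^sub>2_def)
  have "(\<Sum>j\<in>{1..n}. 1 / sqrt (\<bar>real i - real j\<bar> + 1)) =
      (\<Sum>j\<in>A\<^sub>1. 1 / sqrt (\<bar>real i - real j\<bar> + 1)) + (\<Sum>j\<in>A\<^sub>2. 1 / sqrt (\<bar>real i - real j\<bar> + 1))"
    unfolding split by (rule sum.union_disjoint) (auto simp: A\<^sub>1_def A\<^sub>2_def)
  also have "\<dots> = (\<Sum>j\<in>A\<^sub>1. 1 / sqrt (real (j - i) + 1)) + (\<Sum>j\<in>A\<^sub>2. 1 / sqrt (real (i - j) + 1))"
    by (intro arg_cong2[where f = "(+)"] sum.cong) (auto simp: A\<^sub>1_def A\<^sub>2_def of_nat_diff)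
  also have "\<dots> \<le> 2 * sqrt (real n) + 2 * sqrt (real n)"
    using assms by (intro add_mono sum_inverse_sqrt_inj_le) (auto simp: A\<^sub>1_def A\<^sub>2_def inj_on_def)
  finally show ?thesis
    by simp
qed

lemma variance_average_le:
  fixes X :: "nat \<Rightarrow> 'a \<Rightarrow> real"
  assumes "finite (set_pmf M)" and "n \<ge> 1" and "\<And>i x. 0 \<le> X i x" and "\<And>i x. X i x \<le> 1" and "B \<ge> 1"
    and cov: "\<And>i j. 1 \<le> i \<Longrightarrow> i < j \<Longrightarrow> j \<le> n \<Longrightarrow>
      \<bar>measure_pmf.expectation M (\<lambda>x. (X i x - measure_pmf.expectation M (X i)) *
        (X j x - measure_pmf.expectation M (X j)))\<bar> \<le> B / sqrt (real (j - i) + 1)"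
  shows "measure_pmf.variance M (\<lambda>x. (1 / real n) * (\<Sum>i=1..n. X i x)) \<le> 4 * B / sqrt (real n)"
proof -
  define Cov where "Cov i j = measure_pmf.expectation M
    (\<lambda>x. (X i x - measure_pmf.expectation M (X i)) * (X j x - measure_pmf.expectation M (X j)))" for i j
  have cov_le: "Cov i j \<le> B / sqrt (\<bar>real i - real j\<bar> + 1)" if "i \<in> {1..n}" "j \<in> {1..n}" for i j
  proof -
    consider "i = j" | "i < j" | "j < i"
      by linarith
    then show ?thesis
    proof cases
      case 1
      have "\<bar>Cov i j\<bar> \<le> 1"
        unfolding Cov_def 1 using assms(3,4) by (rule abs_expectation_centered_square_le)
      then show ?thesis
        using 1 assms(5) by simp
    next
      case 2
      then show ?thesis
        using that cov[of i j] by (simp add: Cov_def of_nat_diff)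
    next
      case 3
      then show ?thesis
        using that cov[of j i] by (simp add: Cov_def of_nat_diff abs_minus_commute mult.commute)
    qed
  qed
  have "measure_pmf.variance M (\<lambda>x. (1 / real n) * (\<Sum>i=1..n. X i x)) =
      (1 / real n)\<^sup>2 * (\<Sum>i\<in>{1..n}. \<Sum>j\<in>{1..n}. Cov i j)"
    unfolding Cov_def by (rule variance_scaled_sum_pmf[OF assms(1)]) simp
  also have "\<dots> \<le> (1 / real n)\<^sup>2 * (\<Sum>i\<in>{1..n}. B * (\<Sum>j\<in>{1..n}. 1 / sqrt (\<bar>real i - real j\<bar> + 1)))"
    unfolding sum_distrib_left using cov_le by (intro mult_left_mono sum_mono) auto
  also have "\<dots> \<le> (1 / real n)\<^sup>2 * (\<Sum>i\<in>{1..n}. B * (4 * sqrt (real n)))"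
    using assms(5) by (intro mult_left_mono sum_mono sum_inverse_sqrt_dist_le) auto
  also have "\<dots> = 4 * B * (sqrt (real n) / real n)"
    by (simp add: power2_eq_square)
  also have "sqrt (real n) / real n = 1 / sqrt (real n)"
    using assms(2) by (simp add: divide_simps)
  finally show ?thesis
    by simp
qed

lemma covariance_X_ind_le_powr:
  assumes "\<forall>t\<ge>1. valid_type k (ch t)" and "\<forall>t\<ge>1. \<forall>j<k. c0 \<le> ch t ! j"
    and "0 < c0" "c0 \<le> 1/2" "k \<ge> 1" and "1 \<le> i" "i < j" "j \<le> n" and "\<epsilon> > 0" "C \<ge> 0"
    and "2 ^ card (prime_factors j) \<le> C * real j powr \<epsilon>"
  shows "\<bar>measure_pmf.expectation (steps_pmf ch n)
      (\<lambda>ws. (X_ind k ws i - measure_pmf.expectation (steps_pmf ch n) (\<lambda>ws. X_ind k ws i)) *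
            (X_ind k ws j - measure_pmf.expectation (steps_pmf ch n) (\<lambda>ws. X_ind k ws j)))\<bar>
    \<le> (C * real (k - 1) * 2 / sqrt c0) * real n powr \<epsilon> / sqrt (real (j - i) + 1)"
proof -
  have "C * real j powr \<epsilon> \<le> C * real n powr \<epsilon>"
    using assms(8-10) by (intro mult_left_mono powr_mono2) auto
  with assms(11) have "2 ^ card (prime_factors j) \<le> C * real n powr \<epsilon>"
    by linarith
  then have "2 ^ card (prime_factors j) * (real (k - 1) * (2 / sqrt ((real (j - i) + 1) * c0)))
      \<le> C * real n powr \<epsilon> * (real (k - 1) * (2 / sqrt ((real (j - i) + 1) * c0)))"
    by (rule mult_right_mono) (use assms(3) in simp)
  also have "\<dots> = (C * real (k - 1) * 2 / sqrt c0) * real n powr \<epsilon> / sqrt (real (j - i) + 1)"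
    using assms(3) by (simp add: real_sqrt_mult mult_ac)
  finally show ?thesis
    using covariance_X_ind_le[OF assms(1-8)] by linarith
qed

lemma variance_S_bar_le:
  assumes "\<forall>t\<ge>1. valid_type k (ch t)" and "\<forall>t\<ge>1. \<forall>j<k. c0 \<le> ch t ! j"
    and "0 < c0" "c0 \<le> 1/2" "k \<ge> 1" and "n \<ge> 1" and "\<epsilon> > 0" "C \<ge> 0"
    and "\<And>j. j > 0 \<Longrightarrow> 2 ^ card (prime_factors j) \<le> C * real j powr \<epsilon>"
  shows "measure_pmf.variance (steps_pmf ch n) (S_bar k n)
    \<le> 4 * (C * real (k - 1) * 2 / sqrt c0 + 1) * real n powr (-1/2 + \<epsilon>)"
proof -
  define K where "K = C * real (k - 1) * 2 / sqrt c0 + 1"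
  have "1 \<le> real n powr \<epsilon>"
    using assms(6,7) by (intro ge_one_powr_ge_zero) auto
  moreover have "1 \<le> K"
    using assms(3,8) by (simp add: K_def)
  ultimately have "1 \<le> K * real n powr \<epsilon>"
    using mult_mono[of 1 K 1 "real n powr \<epsilon>"] by simp
  have "S_bar k n = (\<lambda>ws. (1 / real n) * (\<Sum>i=1..n. X_ind k ws i))"
    by (simp add: S_bar_def fun_eq_iff)
  then have "measure_pmf.variance (steps_pmf ch n) (S_bar k n) \<le> 4 * (K * real n powr \<epsilon>) / sqrt (real n)"
    using \<open>1 \<le> K * real n powr \<epsilon>\<close>
  proof (simp only:, intro variance_average_le[OF finite_set_pmf_steps_pmf[OF assms(1)] assms(6)])
    fix i j
    assume "1 \<le> i" "i < j" "j \<le> n"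
    have "(C * real (k - 1) * 2 / sqrt c0) * real n powr \<epsilon> \<le> K * real n powr \<epsilon>"
      unfolding K_def by (intro mult_right_mono) auto
    then have "(C * real (k - 1) * 2 / sqrt c0) * real n powr \<epsilon> / sqrt (real (j - i) + 1) \<le>
        K * real n powr \<epsilon> / sqrt (real (j - i) + 1)"
      by (rule divide_right_mono) simp
    with covariance_X_ind_le_powr[OF assms(1-5) \<open>1 \<le> i\<close> \<open>i < j\<close> \<open>j \<le> n\<close> assms(7,8) assms(9)[of j]]
    show "\<bar>measure_pmf.expectation (steps_pmf ch n)
        (\<lambda>ws. (X_ind k ws i - measure_pmf.expectation (steps_pmf ch n) (\<lambda>ws. X_ind k ws i)) *
              (X_ind k ws j - measure_pmf.expectation (steps_pmf ch n) (\<lambda>ws. X_ind k ws j)))\<bar>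
      \<le> K * real n powr \<epsilon> / sqrt (real (j - i) + 1)"
      using \<open>1 \<le> i\<close> \<open>i < j\<close> by simp
  qed (auto simp: X_ind_def)
  also have "\<dots> = 4 * K * (real n powr \<epsilon> / real n powr (1/2))"
    using assms(6) by (simp add: powr_half_sqrt)
  also have "real n powr \<epsilon> / real n powr (1/2) = real n powr (-1/2 + \<epsilon>)"
    by (simp add: powr_diff[symmetric])
  finally show ?thesis
    by (simp add: K_def)
qed

lemma valid_types_uniform_lower_bound:
  assumes "finite A" and "\<forall>\<alpha>\<in>A. valid_type k \<alpha>"
  obtains c0 :: real where "0 < c0" and "c0 \<le> 1/2" and "\<forall>\<alpha>\<in>A. \<forall>j<k. c0 \<le> \<alpha> ! j"
proof
  define V where "V = insert (1/2) ((\<lambda>(\<alpha>, j). \<alpha> ! j) ` (A \<times> {..<k}))"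
  have "finite V"
    using assms(1) by (simp add: V_def)
  moreover have "\<forall>v\<in>V. 0 < v"
    using assms(2) valid_typeD(2) by (fastforce simp: V_def)
  ultimately show "0 < Min V"
    by (simp add: V_def)
  show "Min V \<le> 1/2"
    using \<open>finite V\<close> by (intro Min_le) (simp_all add: V_def)
  show "\<forall>\<alpha>\<in>A. \<forall>j<k. Min V \<le> \<alpha> ! j"
    using \<open>finite V\<close> by (intro ballI allI impI Min_le) (force simp: V_def)+
qed

theorem proposition3p2:
  fixes q k :: nat and A :: "real list set"
  assumes "q \<ge> 1" and "k \<ge> 2"
    and "finite A" and "card A = q"
    and "\<forall>\<alpha>\<in>A. valid_type k \<alpha>"
  shows "\<forall>\<epsilon>>0. \<exists>C N. \<forall>ch. (\<forall>i\<ge>1. ch i \<in> A) \<longrightarrow>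
           (\<forall>n\<ge>N. measure_pmf.variance (steps_pmf ch n) (S_bar k n)
                     \<le> C * real n powr (-1/2 + \<epsilon>))"
proof (intro allI impI)
  fix \<epsilon> :: real
  assume "\<epsilon> > 0"
  obtain c0 where c0: "0 < c0" "c0 \<le> 1/2" "\<forall>\<alpha>\<in>A. \<forall>j<k. c0 \<le> \<alpha> ! j"
    using valid_types_uniform_lower_bound[OF assms(3,5)] by blast
  obtain C where C: "C > 0" "\<And>j. j > 0 \<Longrightarrow> 2 ^ card (prime_factors j) \<le> C * real j powr \<epsilon>"
    using two_pow_card_prime_factors_le[OF \<open>\<epsilon> > 0\<close>] by blast
  show "\<exists>C N. \<forall>ch. (\<forall>i\<ge>1. ch i \<in> A) \<longrightarrow>
      (\<forall>n\<ge>N. measure_pmf.variance (steps_pmf ch n) (S_bar k n) \<le> C * real n powr (-1/2 + \<epsilon>))"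
  proof (intro exI[of _ "4 * (C * real (k - 1) * 2 / sqrt c0 + 1)"] exI[of _ 1] allI impI)
    fix ch :: "nat \<Rightarrow> real list" and n :: nat
    assume "\<forall>i\<ge>1. ch i \<in> A" and "1 \<le> n"
    then show "measure_pmf.variance (steps_pmf ch n) (S_bar k n)
        \<le> 4 * (C * real (k - 1) * 2 / sqrt c0 + 1) * real n powr (-1/2 + \<epsilon>)"
      using assms(2,5) c0 C \<open>\<epsilon> > 0\<close> by (intro variance_S_bar_le) auto
  qed
qed

end
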